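(* Assume (A1)–(A4) below. Then the following hold. - If $a>0$, then $\mathcal C_{\rm num}=\{0\}$, and the unique boundary layer profile associated with $0$ is the zero sequence. - If $a<0$, then $\mathcal C_{\rm num}=\mathbb{R}$. For every $u\in\mathbb{R}$ there is a unique boundary layer profile $(v_j)_{j\in\mathbb{N}}$ associated with $u$, and it decays exponentially fast as $j\to\infty$. Moreover, $v_j=u\,w_j$ for all $j\ge0$, where $(w_j)$ is the boundary layer profile associated with $u=1$.
   Context: Fix the following data: - a real number $a\neq0$; - nonnegative integers $p,r$ and real coefficients $a_{-r},\dots,a_p$ with $a_{-r}\neq0$ and $a_p\neq0$; - an integer $k\ge1$ and real coefficients $\alpha_0,\dots,\alpha_k$, $\beta_0,\dots,\beta_{k-1}$ with $\alpha_k=1$ and $|\alpha_0|+|\beta_0|>0$; - a fixed ratio $\lambda>0$. For $\Delta t\in(0,1]$ set $\Delta x=\Delta t/\lambda$. Let $\mathcal A(z)=\sum_{\ell=-r}^p a_\ell z^\ell$ for $z\in\mathbb{C}\setminus\{0\}$. Assumptions: (A1) $\sum_{\ell=-r}^p a_\ell=0$ and $\sum_{\ell=-r}^p\ell a_\ell=a$. (A2) $\sum_{\sigma=0}^k\alpha_\sigma=0$ and $\sum_{\sigma=0}^k\sigma\alpha_\sigma=\sum_{\sigma=0}^{k-1}\beta_\sigma$. (A3) There is $C>0$ such that for all $\Delta t\in(0,1]$, every solution $(u_j^n)_{j\in\mathbb{Z},n\in\mathbb{N}}$ of $\sum_{\sigma=0}^k\alpha_\sigma u_j^{n+\sigma}+\lambda\sum_{\sigma=0}^{k-1}\beta_\sigma\sum_{\ell=-r}^pa_\ell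 u_{j+\ell}^{n+\sigma}=0$ ($j\in\mathbb{Z}$, $n\in\mathbb{N}$) satisfies $\sup_{n}\sum_{j\in\mathbb{Z}}\Delta x|u_j^n|^2\le C\sum_{\sigma=0}^{k-1}\sum_{j\in\mathbb{Z}}\Delta x|u_j^\sigma|^2$. (A4) $\mathcal A(e^{i\theta})\neq0$ for all $\theta\in[-\pi,\pi]\setminus\{0\}$. Numerical flux: define $f_\ell=-\sum_{i=-r}^{\ell}a_i$ for $\ell=-r,\dots,p-1$, and $F(v_0,\dots,v_{p+r-1})=\sum_{\ell=-r}^{p-1}f_\ell v_{\ell+r}$. Then $\sum_{\ell=-r}^pa_\ell u_{j+\ell}=F(u_{j-r+1},\dots,u_{j+p})-F(u_{j-r},\dots,u_{j+p-1})$. Boundary layer profile: given $u\in\mathbb{R}$, a boundary layer profile associated with $u$ is a real sequence $(v_j)_{j\in\mathbb{N}}$ such that (i) $v_0=\dots=v_{r-1}=-u$; (ii) $F(u+v_j,\dots,u+v_{j+p+r-1})=F(u,\dots,u)$ for all $j\ge0$; (iii) $v_j\to0$ as $j\to\infty$. $\mathcal C_{\rm num}$ denotes the set of all $u\in\mathbb{R}$ for which a boundary layer profile associated with $u$ exists. *)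

theory Defs
  imports "HOL-Analysis.Analysis"
begin

text \<open>Coefficients a_l of the scheme are given as a function A :: int => real;
only the values for l in {-r..p} matter.\<close>

definition flux_coeff :: "(int \<Rightarrow> real) \<Rightarrow> nat \<Rightarrow> int \<Rightarrow> real" where
  "flux_coeff A r l = - (\<Sum>i\<in>{- int r..l}. A i)"

definition num_flux :: "(int \<Rightarrow> real) \<Rightarrow> nat \<Rightarrow> nat \<Rightarrow> (nat \<Rightarrow> real) \<Rightarrow> real" where
  "num_flux A r p w = (\<Sum>l\<in>{- int r..int p - 1}. flux_coeff A r l * w (nat (l + int r)))"

definition boundary_layer_profile ::
  "(int \<Rightarrow> real) \<Rightarrow> nat \<Rightarrow> nat \<Rightarrow> real \<Rightarrow> (nat \<Rightarrow> real) \<Rightarrow> bool" where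
  "boundary_layer_profile A r p u v \<longleftrightarrow>
     (\<forall>j<r. v j = - u) \<and>
     (\<forall>j. num_flux A r p (\<lambda>i. u + v (j + i)) = num_flux A r p (\<lambda>_. u)) \<and>
     v \<longlonglongrightarrow> 0"

definition C_num :: "(int \<Rightarrow> real) \<Rightarrow> nat \<Rightarrow> nat \<Rightarrow> real set" where
  "C_num A r p = {u. \<exists>v. boundary_layer_profile A r p u v}"

definition symbol :: "(int \<Rightarrow> real) \<Rightarrow> nat \<Rightarrow> nat \<Rightarrow> complex \<Rightarrow> complex" where
  "symbol A r p z = (\<Sum>l\<in>{- int r..int p}. complex_of_real (A l) * z powi l)"

definition scheme_solution ::
  "(int \<Rightarrow> real) \<Rightarrow> nat \<Rightarrow> nat \<Rightarrow> nat \<Rightarrow> (nat \<Rightarrow> real) \<Rightarrow> (nat \<Rightarrow> real) \<Rightarrow> real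
    \<Rightarrow> (int \<Rightarrow> nat \<Rightarrow> real) \<Rightarrow> bool" where
  "scheme_solution A r p k \<alpha> \<beta> lam u \<longleftrightarrow>
     (\<forall>j n. (\<Sum>\<sigma>\<le>k. \<alpha> \<sigma> * u j (n + \<sigma>))
        + lam * (\<Sum>\<sigma><k. \<beta> \<sigma> * (\<Sum>l\<in>{- int r..int p}. A l * u (j + l) (n + \<sigma>))) = 0)"

text \<open>(A3), with sums over Z of nonnegative terms; when the right-hand side is
finite (initial data square summable) the left-hand side is finite and bounded.\<close>
definition stable_scheme ::
  "(int \<Rightarrow> real) \<Rightarrow> nat \<Rightarrow> nat \<Rightarrow> nat \<Rightarrow> (nat \<Rightarrow> real) \<Rightarrow> (nat \<Rightarrow> real) \<Rightarrow> real \<Rightarrow> bool" where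
  "stable_scheme A r p k \<alpha> \<beta> lam \<longleftrightarrow>
     (\<exists>C>0. \<forall>dt. 0 < dt \<and> dt \<le> 1 \<longrightarrow>
        (\<forall>u. scheme_solution A r p k \<alpha> \<beta> lam u \<longrightarrow>
           (\<forall>\<sigma><k. (\<lambda>j. (dt / lam) * (u j \<sigma>)\<^sup>2) summable_on UNIV) \<longrightarrow>
           (\<forall>n. (\<lambda>j. (dt / lam) * (u j n)\<^sup>2) summable_on UNIV \<and>
                (\<Sum>\<^sub>\<infinity>j. (dt / lam) * (u j n)\<^sup>2)
                  \<le> C * (\<Sum>\<sigma><k. \<Sum>\<^sub>\<infinity>j. (dt / lam) * (u j \<sigma>)\<^sup>2))))"

end

theory Submission
  imports Defs "HOL-Complex_Analysis.Residue_Theorem" "HOL-Computational_Algebra.Fundamental_Theorem_Algebra"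
begin

text \<open>A boundary layer profile solves the linear recurrence flux_poly(S) v = 0, with S the
  shift, r prescribed initial values and decay at infinity. No root of flux_poly lies on the unit
  circle (by (A4) at \<kappa> \<noteq> 1 and because flux_poly 1 = a \<noteq> 0), and the decaying solutions are
  exactly the solutions of the monic factor carrying the m roots inside the disc. So everything
  hinges on m: it is r - 1 if a > 0 and r if a < 0. To count, follow the roots \<kappa> of the
  characteristic equation alpha_sum \<tau> + lam beta_sum \<tau> symbol \<kappa> = 0 (times \<kappa>^r) as \<tau>
  decreases from \<infinity>, where r roots sit at 0, to 1. By stability (A3) no root lies on the unit
  circle while \<tau> > 1, so the count r persists. At \<tau> = 1 the equation becomes
  (\<kappa> - 1) flux_poly \<kappa> = 0, and the consistency conditions (A1), (A2) force the root \<kappa> = 1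
  to lie inside the disc for \<tau> slightly above 1 when a > 0, and outside when a < 0.\<close>

section \<open>Polynomials acting on sequences through the shift\<close>

definition poly_shift :: "'a::comm_ring_1 poly \<Rightarrow> (nat \<Rightarrow> 'a) \<Rightarrow> nat \<Rightarrow> 'a" where
  "poly_shift H v j = (\<Sum>i\<le>degree H. coeff H i * v (j + i))"

lemma poly_shift_conv_sum: "degree H < n \<Longrightarrow> poly_shift H v j = (\<Sum>i<n. coeff H i * v (j + i))"
  unfolding poly_shift_def by (rule sum.mono_neutral_left) (auto simp: coeff_eq_0)

lemma poly_shift_0 [simp]: "poly_shift 0 v j = 0"
  by (simp add: poly_shift_def)

lemma poly_shift_degree_0: "degree H = 0 \<Longrightarrow> poly_shift H v j = coeff H 0 * v j"
  by (simp add: poly_shift_def)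

lemma poly_shift_add: "poly_shift (G + H) v j = poly_shift G v j + poly_shift H v j"
proof -
  define n where "n = Suc (max (degree G) (degree H))"
  have "degree (G + H) < n" "degree G < n" "degree H < n"
    unfolding n_def using degree_add_le_max[of G H] by auto
  then show ?thesis
    by (simp only: poly_shift_conv_sum[of _ n] sum.distrib[symmetric] coeff_add distrib_right)
qed

lemma poly_shift_smult: "poly_shift (smult c H) v j = c * poly_shift H v j"
proof -
  have "degree (smult c H) < Suc (degree H)" "degree H < Suc (degree H)"
    using degree_smult_le[of c H] by auto
  then show ?thesis
    by (simp only: poly_shift_conv_sum[of _ "Suc (degree H)"] sum_distrib_left coeff_smult mult.assoc)
qed

lemma poly_shift_pCons: "poly_shift (pCons c H) v j = c * v j + poly_shift H v (Suc j)"
proof -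
  have "degree (pCons c H) < Suc (Suc (degree H))" "degree H < Suc (degree H)"
    by (auto simp: degree_pCons_le le_less_trans)
  then show ?thesis
    by (simp only: poly_shift_conv_sum[of "pCons c H" "Suc (Suc (degree H))"]
        poly_shift_conv_sum[of H "Suc (degree H)"] sum.lessThan_Suc_shift) simp
qed

lemma poly_shift_mult: "poly_shift (G * H) v j = poly_shift G (poly_shift H v) j"
proof (induction G arbitrary: j)
  case (pCons c G)
  have "poly_shift (pCons c G * H) v j = c * poly_shift H v j + poly_shift (G * H) v (Suc j)"
    by (simp add: poly_shift_add poly_shift_smult poly_shift_pCons)
  then show ?case using pCons by (simp add: poly_shift_pCons)
qed simp

lemma poly_shift_linear: "poly_shift [:-z, 1:] v j = v (Suc j) - z * v j"
  by (simp add: poly_shift_pCons)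

lemma poly_shift_scale: "poly_shift H (\<lambda>j. c * v j) j = c * poly_shift H v j"
  unfolding poly_shift_def by (simp add: sum_distrib_left algebra_simps)

lemma poly_shift_diff: "poly_shift H (\<lambda>j. v j - w j) j = poly_shift H v j - poly_shift H w j"
  unfolding poly_shift_def by (simp add: sum_subtractf algebra_simps)

lemma poly_shift_tendsto_0:
  fixes v :: "nat \<Rightarrow> 'a::{comm_ring_1,real_normed_algebra}"
  assumes "v \<longlonglongrightarrow> 0"
  shows "poly_shift H v \<longlonglongrightarrow> 0"
proof -
  have "(\<lambda>j. \<Sum>i\<le>degree H. coeff H i * v (j + i)) \<longlonglongrightarrow> (\<Sum>i\<le>degree H. coeff H i * 0)"
    by (intro tendsto_sum tendsto_mult tendsto_const)
      (use LIMSEQ_ignore_initial_segment[OF assms] in \<open>simp add: add.commute\<close>)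
  then show ?thesis unfolding poly_shift_def[abs_def] by simp
qed

lemma poly_shift_monic:
  assumes "lead_coeff Q = 1" "degree Q = m"
  shows "poly_shift Q v j = v (j + m) + (\<Sum>i<m. coeff Q i * v (j + i))"
  using assms by (simp add: poly_shift_def lessThan_Suc_atMost[symmetric] del: lessThan_Suc_atMost)

section \<open>Linear recurrences\<close>

lemma complex_poly_root_factor:
  fixes P :: "complex poly"
  assumes "degree P > 0"
  obtains z P' where "P = [:-z, 1:] * P'" "poly P z = 0" "degree P' = degree P - 1"
proof -
  have "\<not> constant (poly P)" using assms constant_degree[of P] by simp
  then obtain z where z: "poly P z = 0"
    using fundamental_theorem_of_algebra by blast
  then obtain P' where P': "P = [:-z, 1:] * P'" by (metis dvdE poly_eq_0_iff_dvd)
  then have "P' \<noteq> 0" using assms by auto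
  then have "degree ([:-z, 1:] * P') = degree [:-z, 1:] + degree P'"
    by (intro degree_mult_eq) auto
  then have "degree P' = degree P - 1" using P' by simp
  then show ?thesis using that P' z by blast
qed

text \<open>A solution of a recurrence whose characteristic roots all lie outside the closed unit
  disc grows geometrically unless it vanishes.\<close>
lemma recurrence_decaying_solution_eq_0:
  fixes R :: "complex poly"
  assumes "R \<noteq> 0" "\<forall>z. poly R z = 0 \<longrightarrow> cmod z > 1"
    and "\<forall>j. poly_shift R w j = 0" "w \<longlonglongrightarrow> 0"
  shows "w j = 0"
  using assms
proof (induction "degree R" arbitrary: R j)
  case 0
  then have "coeff R 0 \<noteq> 0" by (metis leading_coeff_0_iff)
  then show ?case using 0 poly_shift_degree_0[of R w j] by simp
next
  case (Suc n)
  then have "degree R > 0" by simp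
  then obtain z R' where zR: "R = [:-z, 1:] * R'" "poly R z = 0" "degree R' = degree R - 1"
    by (rule complex_poly_root_factor)
  have z: "cmod z > 1" using Suc.prems(2) zR(2) by blast
  define y where "y = poly_shift R' w"
  have "poly_shift R w i = poly_shift [:-z, 1:] y i" for i
    unfolding zR(1) y_def by (rule poly_shift_mult)
  then have y_Suc: "y (Suc i) = z * y i" for i
    using Suc.prems(3) poly_shift_linear[of z y i] by simp
  have y_pow: "y i = z ^ i * y 0" for i by (induction i) (auto simp: y_Suc)
  have y_ge: "cmod (y 0) \<le> cmod (y i)" for i
  proof -
    have "1 * cmod (y 0) \<le> cmod z ^ i * cmod (y 0)"
      using z by (intro mult_right_mono one_le_power) auto
    also have "\<dots> = cmod (y i)" by (simp only: y_pow[of i] norm_mult norm_power)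
    finally show ?thesis by simp
  qed
  have "y \<longlonglongrightarrow> 0" unfolding y_def using poly_shift_tendsto_0 Suc.prems(4) by blast
  then have "cmod (y 0) \<le> norm (0::complex)"
    by (rule LIMSEQ_le_const[OF tendsto_norm]) (use y_ge in blast)
  then have "y i = 0" for i using y_pow[of i] by simp
  then have "\<forall>i. poly_shift R' w i = 0" unfolding y_def by blast
  moreover have "R' \<noteq> 0" "\<forall>z. poly R' z = 0 \<longrightarrow> cmod z > 1"
    using Suc.prems(1,2) zR(1) by auto
  moreover have "n = degree R'" using Suc.hyps(2) zR(3) by simp
  ultimately show ?case using Suc.hyps(1)[of R'] Suc.prems(4) by simp
qed

definition exp_decaying :: "(nat \<Rightarrow> complex) \<Rightarrow> bool" where
  "exp_decaying v \<longleftrightarrow> (\<exists>K \<nu>. 0 < \<nu> \<and> \<nu> < 1 \<and> (\<forall>j. cmod (v j) \<le> K * \<nu> ^ j))"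

lemma exp_decaying_first_order:
  assumes "cmod z < 1" "exp_decaying y" "\<And>j. v (Suc j) = z * v j + y j"
  shows "exp_decaying v"
proof -
  obtain K \<mu> where K: "0 < \<mu>" "\<mu> < 1" "\<And>j. cmod (y j) \<le> K * \<mu> ^ j"
    using assms(2) exp_decaying_def by auto
  define \<nu> where "\<nu> = (max (cmod z) \<mu> + 1) / 2"
  have \<nu>: "0 < \<nu>" "\<nu> < 1" "cmod z < \<nu>" "\<mu> \<le> \<nu>" using K assms(1) unfolding \<nu>_def by auto
  define L where "L = max (cmod (v 0)) (K / (\<nu> - cmod z))"
  have "0 \<le> K" using K(3)[of 0] by (metis mult_1_right norm_ge_zero order_trans power_0)
  have "K / (\<nu> - cmod z) \<le> L" unfolding L_def by simp
  then have KL: "K \<le> (\<nu> - cmod z) * L" using \<nu> by (simp add: pos_divide_le_eq mult.commute)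
  have "cmod (v j) \<le> L * \<nu> ^ j" for j
  proof (induction j)
    case (Suc j)
    have "\<mu> ^ j \<le> \<nu> ^ j" using K(1) \<nu> by (intro power_mono) auto
    then have y_le: "cmod (y j) \<le> K * \<nu> ^ j" using K(3) \<open>0 \<le> K\<close> by (meson mult_left_mono order_trans)
    have K_le: "K * \<nu> ^ j \<le> (\<nu> - cmod z) * L * \<nu> ^ j" using \<nu> KL by (simp add: mult_right_mono)
    have v_le: "cmod z * cmod (v j) \<le> cmod z * (L * \<nu> ^ j)" using Suc by (simp add: mult_left_mono)
    have "cmod (v (Suc j)) \<le> cmod z * cmod (v j) + cmod (y j)"
      using assms(3) norm_triangle_ineq[of "z * v j" "y j"] by (simp add: norm_mult)
    also have "\<dots> \<le> cmod z * (L * \<nu> ^ j) + (\<nu> - cmod z) * L * \<nu> ^ j"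
      using y_le K_le v_le by linarith
    also have "\<dots> = L * \<nu> ^ Suc j" by (simp add: algebra_simps)
    finally show ?case .
  qed (simp add: L_def)
  then show ?thesis using \<nu> exp_decaying_def by blast
qed

lemma recurrence_solution_exp_decaying:
  fixes Q :: "complex poly"
  assumes "Q \<noteq> 0" "\<forall>z. poly Q z = 0 \<longrightarrow> cmod z < 1" "\<forall>j. poly_shift Q v j = 0"
  shows "exp_decaying v"
  using assms
proof (induction "degree Q" arbitrary: Q v)
  case 0
  then have "coeff Q 0 \<noteq> 0" by (metis leading_coeff_0_iff)
  then have "v j = 0" for j using 0 poly_shift_degree_0[of Q v j] by simp
  then show ?case unfolding exp_decaying_def by (intro exI[of _ 0] exI[of _ "1/2"]) auto
next
  case (Suc n)
  then have "degree Q > 0" by simp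
  then obtain z Q' where zQ: "Q = [:-z, 1:] * Q'" "poly Q z = 0" "degree Q' = degree Q - 1"
    by (rule complex_poly_root_factor)
  define y where "y = poly_shift [:-z, 1:] v"
  have "\<forall>j. poly_shift Q' y j = 0"
    using Suc.prems(3) unfolding zQ(1) y_def by (metis poly_shift_mult mult.commute)
  moreover have "Q' \<noteq> 0" "\<forall>z. poly Q' z = 0 \<longrightarrow> cmod z < 1" using Suc.prems zQ(1) by auto
  moreover have "n = degree Q'" using Suc.hyps(2) zQ(3) by simp
  ultimately have "exp_decaying y" using Suc.hyps(1) by blast
  moreover have "v (Suc j) = z * v j + y j" for j by (simp add: y_def poly_shift_linear)
  moreover have "cmod z < 1" using Suc.prems(2) zQ(2) by blast
  ultimately show ?case using exp_decaying_first_order by blast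
qed

lemma monic_recurrence_zero_initial:
  assumes "lead_coeff Q = 1" "degree Q = m" "\<forall>j. poly_shift Q v j = 0" "\<forall>i<m. v i = 0"
  shows "v n = 0"
proof (induction n rule: less_induct)
  case (less n)
  show ?case
  proof (cases "n < m")
    case False
    then obtain j where j: "n = j + m" by (metis add.commute le_iff_add not_less)
    have "(\<Sum>i<m. coeff Q i * v (j + i)) = 0" by (rule sum.neutral) (use less j in auto)
    then show ?thesis using assms(3) poly_shift_monic[OF assms(1,2), of v j] j by simp
  qed (use assms in auto)
qed

text \<open>The sequence with initial values init 0, ..., init (m - 1) and the order-m rule
  x (n + m) = f (x n, ..., x (n + m - 1)), computed by iterating a shift register of length m.\<close>
definition shift_register :: "nat \<Rightarrow> ((nat \<Rightarrow> 'a) \<Rightarrow> 'a) \<Rightarrow> (nat \<Rightarrow> 'a) \<Rightarrow> nat \<Rightarrow> 'a" where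
  "shift_register m f s i = (if i + 1 < m then s (i + 1) else f s)"

definition recurrence_seq :: "nat \<Rightarrow> ((nat \<Rightarrow> 'a) \<Rightarrow> 'a) \<Rightarrow> (nat \<Rightarrow> 'a) \<Rightarrow> nat \<Rightarrow> 'a" where
  "recurrence_seq m f init n = (shift_register m f ^^ n) init 0"

lemma shift_register_iterate:
  "i < m \<Longrightarrow> (shift_register m f ^^ n) s i = (shift_register m f ^^ (n + i)) s 0"
proof (induction i arbitrary: n)
  case (Suc i)
  have "(shift_register m f ^^ n) s (Suc i) = (shift_register m f ^^ Suc n) s i"
    using Suc.prems by (simp only: funpow.simps comp_apply) (simp add: shift_register_def)
  also have "\<dots> = (shift_register m f ^^ (Suc n + i)) s 0" using Suc by (simp del: funpow.simps)
  finally show ?case by simp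
qed simp

lemma recurrence_seq_init: "i < m \<Longrightarrow> recurrence_seq m f init i = init i"
  unfolding recurrence_seq_def using shift_register_iterate[where i=i and m=m and f=f and n=0 and s=init] by simp

lemma recurrence_seq_step:
  assumes "m > 0" "\<And>s s'. (\<forall>i<m. s i = s' i) \<Longrightarrow> f s = f s'"
  shows "recurrence_seq m f init (n + m) = f (\<lambda>i. recurrence_seq m f init (n + i))"
proof -
  have "recurrence_seq m f init (n + m) = (shift_register m f ^^ Suc n) init (m - 1)"
    unfolding recurrence_seq_def using shift_register_iterate[where i="m - 1" and m=m and f=f and n="Suc n" and s=init] assms(1)
    by simp
  also have "\<dots> = f ((shift_register m f ^^ n) init)"
    using assms(1) by (simp add: shift_register_def)
  also have "\<dots> = f (\<lambda>i. recurrence_seq m f init (n + i))"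
    by (rule assms(2)) (simp add: recurrence_seq_def shift_register_iterate[where n=n])
  finally show ?thesis .
qed

lemma monic_recurrence_solution_exists:
  fixes Q :: "'a::comm_ring_1 poly"
  assumes "lead_coeff Q = 1" "degree Q = m"
  shows "\<exists>v. (\<forall>j. poly_shift Q v j = 0) \<and> (\<forall>i<m. v i = init i)"
proof (cases "m = 0")
  case True
  then show ?thesis by (intro exI[of _ "\<lambda>_. 0"]) (simp add: poly_shift_def)
next
  case False
  define f where "f = (\<lambda>s::nat \<Rightarrow> 'a. - (\<Sum>i<m. coeff Q i * s i))"
  define v where "v = recurrence_seq m f init"
  have step: "v (n + m) = f (\<lambda>i. v (n + i))" for n
    unfolding v_def using False by (intro recurrence_seq_step) (auto simp: f_def)
  show ?thesis
  proof (intro exI[of _ v] conjI allI impI)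
    show "poly_shift Q v j = 0" for j by (simp add: poly_shift_monic[OF assms] step f_def)
    show "v i = init i" if "i < m" for i using that by (simp add: v_def recurrence_seq_init)
  qed
qed

section \<open>Counting roots in a disc\<close>

definition disc_root_count :: "real \<Rightarrow> complex poly \<Rightarrow> nat" where
  "disc_root_count \<rho> H = (\<Sum>z\<in>{z. poly H z = 0 \<and> cmod z < \<rho>}. order z H)"

lemma disc_root_count_smult: "c \<noteq> 0 \<Longrightarrow> disc_root_count \<rho> (smult c H) = disc_root_count \<rho> H"
  unfolding disc_root_count_def by (simp add: order_smult)

lemma disc_root_count_const: "c \<noteq> 0 \<Longrightarrow> disc_root_count \<rho> [:c:] = 0"
  unfolding disc_root_count_def by simp

lemma order_linear_factor: "order w [:-z, 1:] = (if w = z then 1 else 0)"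
  using order_power_n_n[of z 1] by (simp add: order_0I)

lemma disc_root_count_linear_factor:
  assumes "H \<noteq> 0"
  shows "disc_root_count \<rho> ([:-z, 1:] * H) = disc_root_count \<rho> H + (if cmod z < \<rho> then 1 else 0)"
proof -
  define S where "S = {w. poly H w = 0 \<and> cmod w < \<rho>}"
  define S' where "S' = {w. poly ([:-z, 1:] * H) w = 0 \<and> cmod w < \<rho>}"
  have nz: "[:-z, 1:] * H \<noteq> 0" using assms by (metis mult_eq_0_iff pCons_eq_0_iff zero_neq_one)
  have fin: "finite S'"
    unfolding S'_def using poly_roots_finite[OF nz] by (rule rev_finite_subset) auto
  have "order w ([:-z, 1:] * H) = order w H + (if w = z then 1 else 0)" for w
    using order_mult[OF nz, of w] order_linear_factor[of w z] by simp
  then have "disc_root_count \<rho> ([:-z, 1:] * H)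
      = (\<Sum>w\<in>S'. order w H) + (\<Sum>w\<in>S'. if w = z then 1 else 0)"
    unfolding disc_root_count_def S'_def[symmetric] by (simp add: sum.distrib)
  also have "(\<Sum>w\<in>S'. order w H) = (\<Sum>w\<in>S. order w H)"
    by (rule sum.mono_neutral_right[OF fin]) (auto simp: S_def S'_def order_root assms)
  also have "(\<Sum>w\<in>S'. if w = z then 1 else (0::nat)) = (if cmod z < \<rho> then 1 else 0)"
    using fin by (simp add: sum.delta S'_def)
  finally show ?thesis unfolding disc_root_count_def S_def .
qed

lemma disc_root_count_monomial: "\<rho> > 0 \<Longrightarrow> disc_root_count \<rho> ([:0, 1:] ^ r) = r"
proof (induction r)
  case 0
  then show ?case using disc_root_count_const[of 1 \<rho>] by (simp add: one_pCons)
next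
  case (Suc r)
  have "([:0, 1:] :: complex poly) ^ Suc r = [:-0, 1:] * [:0, 1:] ^ r" by simp
  then show ?case using disc_root_count_linear_factor[of "[:0, 1:] ^ r" \<rho> 0] Suc by simp
qed

lemma poly_split_unit_circle:
  fixes P :: "complex poly"
  assumes "P \<noteq> 0" "\<forall>z. cmod z = 1 \<longrightarrow> poly P z \<noteq> 0"
  obtains Q R where "P = Q * R" "lead_coeff Q = 1" "degree Q = disc_root_count 1 P" "R \<noteq> 0"
    "\<forall>z. poly Q z = 0 \<longrightarrow> cmod z < 1" "\<forall>z. poly R z = 0 \<longrightarrow> cmod z > 1"
  using assms
proof (induction "degree P" arbitrary: P thesis)
  case 0
  then obtain c where c: "P = [:c:]" "c \<noteq> 0" by (metis degree_eq_zeroE pCons_0_0)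
  then show ?case using 0(2)[of 1 P] by (simp add: disc_root_count_const)
next
  case (Suc n)
  then have "degree P > 0" by simp
  then obtain z P' where zP: "P = [:-z, 1:] * P'" "poly P z = 0" "degree P' = degree P - 1"
    by (rule complex_poly_root_factor)
  have P': "P' \<noteq> 0" using Suc.prems(2) zP(1) by auto
  have "\<forall>z. cmod z = 1 \<longrightarrow> poly P' z \<noteq> 0" using Suc.prems(3) zP(1) by auto
  moreover have "n = degree P'" using Suc.hyps(2) zP(3) by simp
  ultimately obtain Q R where QR: "P' = Q * R" "lead_coeff Q = 1" "degree Q = disc_root_count 1 P'"
      "R \<noteq> 0" "\<forall>z. poly Q z = 0 \<longrightarrow> cmod z < 1" "\<forall>z. poly R z = 0 \<longrightarrow> cmod z > 1"
    using Suc.hyps(1)[OF _ _ P'] by blast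
  have count: "disc_root_count 1 P = disc_root_count 1 P' + (if cmod z < 1 then 1 else 0)"
    unfolding zP(1) by (rule disc_root_count_linear_factor[OF P'])
  have "Q \<noteq> 0" using QR(2) by auto
  show ?case
  proof (cases "cmod z < 1")
    case True
    have "degree ([:-z, 1:] * Q) = degree [:-z, 1:] + degree Q"
      using \<open>Q \<noteq> 0\<close> by (intro degree_mult_eq) auto
    moreover have "lead_coeff ([:-z, 1:] * Q) = 1" using QR(2) by (simp only: lead_coeff_mult) simp
    moreover have "P = ([:-z, 1:] * Q) * R" using zP(1) QR(1) by (metis mult.assoc)
    ultimately show ?thesis
      using Suc.prems(1) QR count True by auto
  next
    case False
    then have "cmod z > 1" using Suc.prems(3) zP(2) by force
    then have "\<forall>w. poly ([:-z, 1:] * R) w = 0 \<longrightarrow> cmod w > 1" using QR(6) by auto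
    moreover have "P = Q * ([:-z, 1:] * R)" using zP(1) QR(1) by (metis mult.left_commute)
    moreover have "[:-z, 1:] * R \<noteq> 0" using QR(4) by (metis mult_eq_0_iff pCons_eq_0_iff zero_neq_one)
    moreover have "degree Q = disc_root_count 1 P" using QR(3) count False by simp
    ultimately show ?thesis using Suc.prems(1) QR(2,5) by blast
  qed
qed

lemma zorder_poly:
  assumes "p \<noteq> 0"
  shows "zorder (poly p) z = int (order z p)"
proof -
  obtain q where q: "p = [:-z, 1:] ^ order z p * q" "\<not> [:-z, 1:] dvd q"
    using order_decomp[OF assms] by blast
  have "poly q z \<noteq> 0" using q(2) poly_eq_0_iff_dvd by blast
  show ?thesis
  proof (rule zorder_eqI[of UNIV z "poly q"])
    fix w assume "w \<noteq> z"
    show "poly p w = poly q w * (w - z) powi int (order z p)"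
      by (subst q(1)) (simp add: power_int_of_nat mult.commute)
  qed (use \<open>poly q z \<noteq> 0\<close> in \<open>auto intro: holomorphic_intros\<close>)
qed

lemma disc_root_count_winding_number:
  assumes "H \<noteq> 0" "\<rho> > 0" "\<forall>z. cmod z = \<rho> \<longrightarrow> poly H z \<noteq> 0"
  shows "(\<Sum>z | poly H z = 0. winding_number (circlepath 0 \<rho>) z * zorder (poly H) z)
      = of_nat (disc_root_count \<rho> H)"
proof -
  have fin: "finite {z. poly H z = 0}" using poly_roots_finite[OF assms(1)] .
  have "winding_number (circlepath 0 \<rho>) z * zorder (poly H) z
      = (if cmod z < \<rho> then of_nat (order z H) else 0)" if "poly H z = 0" for z
  proof (cases "cmod z < \<rho>")
    case True
    then have "winding_number (circlepath 0 \<rho>) z = 1" by (intro winding_number_circlepath) simp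
    then show ?thesis using True zorder_poly[OF assms(1)] by simp
  next
    case False
    then have "cmod z > \<rho>" using assms(3) that by force
    then have "winding_number (circlepath 0 \<rho>) z = 0"
      by (intro winding_number_zero_outside[of _ "cball 0 \<rho>"]) (use assms(2) in auto)
    then show ?thesis using False by simp
  qed
  then have "(\<Sum>z | poly H z = 0. winding_number (circlepath 0 \<rho>) z * zorder (poly H) z)
      = (\<Sum>z | poly H z = 0. if cmod z < \<rho> then of_nat (order z H) else 0)"
    by (intro sum.cong) auto
  also have "\<dots> = of_nat (disc_root_count \<rho> H)"
    using fin by (simp add: sum.inter_filter[symmetric] disc_root_count_def conj_commute)
  finally show ?thesis .
qed

lemma disc_root_count_rouche:
  fixes F G :: "complex poly"
  assumes "\<rho> > 0" and less: "\<forall>z. cmod z = \<rho> \<longrightarrow> cmod (poly G z - poly F z) < cmod (poly F z)"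
  shows "disc_root_count \<rho> G = disc_root_count \<rho> F"
proof -
  have "cmod (poly G \<rho> - poly F \<rho>) < cmod (poly F \<rho>)" using less assms(1) by simp
  then have F0: "F \<noteq> 0" and G0: "G \<noteq> 0" by auto
  have F_circle: "\<forall>z. cmod z = \<rho> \<longrightarrow> poly F z \<noteq> 0" using less by force
  have G_circle: "\<forall>z. cmod z = \<rho> \<longrightarrow> poly G z \<noteq> 0" using less by force
  have "(\<Sum>z\<in>{z\<in>UNIV. poly F z + (poly G z - poly F z) = 0}. winding_number (circlepath 0 \<rho>) z *
           zorder (\<lambda>z. poly F z + (poly G z - poly F z)) z)
      = (\<Sum>z\<in>{z\<in>UNIV. poly F z = 0}. winding_number (circlepath 0 \<rho>) z * zorder (poly F) z)"
  proof (rule Rouche_theorem)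
    show "finite {z \<in> UNIV. poly F z + (poly G z - poly F z) = 0}"
      using poly_roots_finite[OF G0] by simp
    show "finite {z \<in> UNIV. poly F z = 0}" using poly_roots_finite[OF F0] by simp
    show "\<forall>z\<in>path_image (circlepath 0 \<rho>). cmod (poly G z - poly F z) < cmod (poly F z)"
      using less assms(1) by auto
    show "(\<lambda>z. poly G z - poly F z) holomorphic_on UNIV" by (intro holomorphic_intros)
  qed (use assms(1) in \<open>auto intro: holomorphic_intros\<close>)
  then have "of_nat (disc_root_count \<rho> G) = (of_nat (disc_root_count \<rho> F) :: complex)"
    using disc_root_count_winding_number[OF G0 assms(1) G_circle]
      disc_root_count_winding_number[OF F0 assms(1) F_circle]
    by simp
  then show ?thesis by simp
qed

lemma disc_root_count_eqI:
  assumes "\<rho> \<le> \<rho>'" "\<forall>z. \<rho> \<le> cmod z \<and> cmod z < \<rho>' \<longrightarrow> poly H z \<noteq> 0"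
  shows "disc_root_count \<rho> H = disc_root_count \<rho>' H"
proof -
  have "{z. poly H z = 0 \<and> cmod z < \<rho>} = {z. poly H z = 0 \<and> cmod z < \<rho>'}"
    using assms by force
  then show ?thesis unfolding disc_root_count_def by simp
qed

text \<open>If the count increases by one from radius \<rho>1 to \<rho>2, the root x found in the annulus
  is the only one there, so it alone decides the count at intermediate radii.\<close>
lemma disc_root_count_single_root:
  assumes "G \<noteq> 0" "\<rho>1 \<le> \<rho>" "\<rho> \<le> \<rho>2" "disc_root_count \<rho>2 G = disc_root_count \<rho>1 G + 1"
    and x: "poly G x = 0" "\<rho>1 \<le> cmod x" "cmod x < \<rho>2"
  shows "disc_root_count \<rho> G = disc_root_count \<rho>1 G + (if cmod x < \<rho> then 1 else 0)"
proof -
  define Z where "Z t = {z. poly G z = 0 \<and> cmod z < t}" for t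
  have fin: "finite (Z t)" for t
    unfolding Z_def using poly_roots_finite[OF assms(1)] by (rule rev_finite_subset) auto
  have split: "disc_root_count t' G = disc_root_count t G + (\<Sum>z\<in>Z t' - Z t. order z G)"
    if "t \<le> t'" for t t'
  proof -
    have "Z t \<subseteq> Z t'" using that unfolding Z_def by auto
    then show ?thesis unfolding disc_root_count_def Z_def[symmetric]
      using sum.subset_diff[OF _ fin, of "Z t" t' "\<lambda>z. order z G"] by simp
  qed
  have annulus: "(\<Sum>z\<in>Z \<rho>2 - Z \<rho>1. order z G) = 1"
    using split[of \<rho>1 \<rho>2] assms(2-4) by simp
  have x_in: "x \<in> Z \<rho>2 - Z \<rho>1" unfolding Z_def using x by auto
  have "order x G \<ge> 1" using x(1) assms(1) order_root by (metis less_one not_le)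
  moreover have "(\<Sum>z\<in>Z \<rho>2 - Z \<rho>1. order z G) = order x G + (\<Sum>z\<in>(Z \<rho>2 - Z \<rho>1) - {x}. order z G)"
    using fin x_in by (subst sum.remove) auto
  ultimately have x_simple: "order x G = 1" and rest: "(\<Sum>z\<in>(Z \<rho>2 - Z \<rho>1) - {x}. order z G) = 0"
    using annulus by linarith+
  have "Z \<rho>2 - Z \<rho>1 - {x} = {}"
  proof (rule ccontr)
    assume "Z \<rho>2 - Z \<rho>1 - {x} \<noteq> {}"
    then obtain y where y: "y \<in> Z \<rho>2 - Z \<rho>1 - {x}" by blast
    then have "order y G = 0" using rest fin by simp
    moreover have "poly G y = 0" using y unfolding Z_def by auto
    ultimately show False using assms(1) order_root by blast
  qed
  then have "Z \<rho>2 - Z \<rho>1 = {x}" using x_in by auto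
  moreover have "Z \<rho> - Z \<rho>1 \<subseteq> Z \<rho>2 - Z \<rho>1" unfolding Z_def using assms(3) by auto
  ultimately have "Z \<rho> - Z \<rho>1 = (if cmod x < \<rho> then {x} else {})"
    using x unfolding Z_def by auto
  then show ?thesis using split[OF assms(2)] x_simple by (auto split: if_splits)
qed

lemma poly_sphere_lower_bound:
  assumes "\<rho> > 0" "\<forall>z. cmod z = \<rho> \<longrightarrow> poly F z \<noteq> 0"
  obtains m where "m > 0" "\<forall>z. cmod z = \<rho> \<longrightarrow> m \<le> cmod (poly F z)"
proof -
  have "continuous_on (sphere 0 \<rho>) (\<lambda>x. cmod (poly F x))" by (intro continuous_intros)
  then have "\<exists>x\<in>sphere 0 \<rho>. \<forall>y\<in>sphere 0 \<rho>. cmod (poly F x) \<le> cmod (poly F y)"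
    using assms(1) by (intro continuous_attains_inf) auto
  then obtain x where "cmod x = \<rho>" "\<forall>y. cmod y = \<rho> \<longrightarrow> cmod (poly F x) \<le> cmod (poly F y)" by auto
  then show ?thesis using assms(2) that[of "cmod (poly F x)"] by auto
qed

section \<open>The flux polynomial and boundary layer profiles\<close>

lemma sum_int_shift: "(\<Sum>l\<in>{- int r..int n - int r}. g l) = (\<Sum>i\<le>n. g (int i - int r))"
  by (rule sum.reindex_bij_witness[where i="\<lambda>i. int i - int r" and j="\<lambda>l. nat (l + int r)"]) auto

lemma pderiv_sum: "pderiv (\<Sum>i\<in>I. f i) = (\<Sum>i\<in>I. pderiv (f i))"
  by (induction I rule: infinite_finite_induct) (auto simp: pderiv_add)

lemma poly_same_sign:
  fixes P :: "real poly"
  assumes "\<forall>x. min s t \<le> x \<and> x \<le> max s t \<longrightarrow> poly P x \<noteq> 0"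
  shows "poly P s * poly P t > 0"
proof (rule ccontr)
  have "poly P s \<noteq> 0" "poly P t \<noteq> 0" using assms by auto
  moreover assume "\<not> poly P s * poly P t > 0"
  ultimately have neg: "poly P s * poly P t < 0" by (simp add: not_less le_less)
  consider "s < t" | "t < s" | "s = t" by linarith
  then show False
  proof cases
    case 1
    then show False using poly_IVT[OF 1 neg] assms by force
  next
    case 2
    then show False using poly_IVT[OF 2] neg assms by (force simp: mult.commute)
  qed (use neg in \<open>simp add: mult_less_0_iff\<close>)
qed

lemma poly_root_between:
  fixes P :: "real poly"
  assumes "poly P s * poly P t < 0"
  obtains x where "min s t < x" "x < max s t" "poly P x = 0"
proof -
  have "poly P s \<noteq> 0" "poly P t \<noteq> 0" using assms by auto
  have "\<exists>x. min s t \<le> x \<and> x \<le> max s t \<and> poly P x = 0"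
    using poly_same_sign[of s t P] assms by force
  then obtain x where "min s t \<le> x" "x \<le> max s t" "poly P x = 0" by blast
  moreover have "x \<noteq> s" "x \<noteq> t" using calculation(3) \<open>poly P s \<noteq> 0\<close> \<open>poly P t \<noteq> 0\<close> by auto
  ultimately show ?thesis using that[of x] by (auto simp: min_def max_def split: if_splits)
qed

locale consistent_stencil =
  fixes A :: "int \<Rightarrow> real" and r p :: nat and a :: real
  assumes a_nonzero: "a \<noteq> 0" and A_p_nonzero: "A (int p) \<noteq> 0"
    and sum_A: "(\<Sum>l\<in>{- int r..int p}. A l) = 0"
    and first_moment_A: "(\<Sum>l\<in>{- int r..int p}. of_int l * A l) = a"
    and symbol_nonzero: "\<forall>\<theta>\<in>{-pi..pi} - {0}. symbol A r p (cis \<theta>) \<noteq> 0"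
begin

text \<open>Viewing coefficient sequences as polynomials: stencil_poly z = z ^ r * symbol A r p z, and
  flux_poly carries the flux coefficients, so that F(u + v_j, ...) - F(u, ...) is
  poly_shift flux_poly v j.\<close>
definition stencil_poly :: "'b::{real_algebra_1,comm_ring_1} poly" where
  "stencil_poly = (\<Sum>i\<le>p + r. monom (of_real (A (int i - int r))) i)"

definition flux_poly :: "'b::{real_algebra_1,comm_ring_1} poly" where
  "flux_poly = (\<Sum>i<p + r. monom (of_real (flux_coeff A r (int i - int r))) i)"

lemma width_pos: "p + r > 0"
  using sum_A A_p_nonzero by (cases "p + r") auto

lemma coeff_stencil_poly:
  "coeff stencil_poly n = (if n \<le> p + r then of_real (A (int n - int r)) else 0)"
  unfolding stencil_poly_def coeff_sum coeff_monom by auto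

lemma coeff_flux_poly:
  "coeff flux_poly n = (if n < p + r then of_real (flux_coeff A r (int n - int r)) else 0)"
  unfolding flux_poly_def coeff_sum coeff_monom by auto

lemma flux_coeff_step: "l \<ge> - int r \<Longrightarrow> flux_coeff A r l = flux_coeff A r (l - 1) - A l"
proof -
  assume "l \<ge> - int r"
  then have "{- int r..l} = insert l {- int r..l - 1}" by auto
  then show ?thesis unfolding flux_coeff_def by simp
qed

lemma flux_coeff_last: "flux_coeff A r (int p - 1) = A (int p)"
  using flux_coeff_step[of "int p"] sum_A by (simp add: flux_coeff_def)

lemma stencil_poly_factor: "stencil_poly = [:-1, 1:] * flux_poly"
proof (rule poly_eqI)
  fix n
  have m: "[:-1, 1:] * flux_poly = pCons 0 flux_poly - flux_poly" by simp
  show "coeff stencil_poly n = coeff ([:-1, 1:] * flux_poly) n"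
  proof (cases n)
    case 0
    then show ?thesis using width_pos flux_coeff_step[of "- int r"]
      by (simp add: m coeff_stencil_poly coeff_flux_poly flux_coeff_def)
  next
    case (Suc m)
    then have "coeff ([:-1, 1:] * flux_poly) n = coeff flux_poly m - coeff flux_poly n"
      by (simp add: m)
    also have "\<dots> = coeff stencil_poly n"
    proof -
      consider "n < p + r" | "n = p + r" | "n > p + r" by linarith
      then show ?thesis
      proof cases
        case 1
        then show ?thesis using flux_coeff_step[of "int n - int r"] Suc
          by (simp add: coeff_flux_poly coeff_stencil_poly of_real_diff[symmetric] del: of_real_diff)
      next
        case 2
        have e1: "int m - int r = int p - 1" and e2: "int n - int r = int p" using 2 Suc by simp_all
        have "coeff flux_poly m - coeff flux_poly n = of_real (flux_coeff A r (int m - int r))"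
          using 2 Suc by (simp add: coeff_flux_poly)
        also have "\<dots> = coeff stencil_poly n"
          unfolding e1 flux_coeff_last using 2 e2 by (simp add: coeff_stencil_poly)
        finally show ?thesis .
      qed (use Suc in \<open>simp add: coeff_flux_poly coeff_stencil_poly\<close>)
    qed
    finally show ?thesis ..
  qed
qed

lemma num_flux_conv_sum: "num_flux A r p w = (\<Sum>i<p + r. flux_coeff A r (int i - int r) * w i)"
proof -
  have "num_flux A r p w
      = (\<Sum>l\<in>{- int r..int (p + r - 1) - int r}. flux_coeff A r l * w (nat (l + int r)))"
    unfolding num_flux_def using width_pos by (intro sum.cong) auto
  also have "\<dots> = (\<Sum>i\<le>p + r - 1. flux_coeff A r (int i - int r) * w i)"
    by (simp only: sum_int_shift) simp
  also have "\<dots> = (\<Sum>i<p + r. flux_coeff A r (int i - int r) * w i)"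
    using width_pos by (intro sum.cong) auto
  finally show ?thesis .
qed

lemma poly_shift_flux_poly:
  "poly_shift flux_poly v j = (\<Sum>i<p + r. of_real (flux_coeff A r (int i - int r)) * v (j + i))"
proof -
  have deg: "degree (flux_poly :: 'b::{real_algebra_1,comm_ring_1} poly) < p + r"
    using width_pos by (intro degree_lessI) (auto simp: coeff_flux_poly)
  show ?thesis unfolding poly_shift_conv_sum[OF deg] by (simp add: coeff_flux_poly)
qed

lemma boundary_layer_profile_iff:
  "boundary_layer_profile A r p u v \<longleftrightarrow>
     (\<forall>j<r. v j = - u) \<and> (\<forall>j. poly_shift flux_poly v j = 0) \<and> v \<longlonglongrightarrow> 0"
proof -
  have "num_flux A r p (\<lambda>i. u + v (j + i)) = num_flux A r p (\<lambda>_. u) + poly_shift flux_poly v j" for j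
    by (simp add: num_flux_conv_sum poly_shift_flux_poly algebra_simps sum.distrib)
  then show ?thesis unfolding boundary_layer_profile_def by auto
qed

lemma poly_shift_flux_poly_of_real:
  "poly_shift flux_poly (\<lambda>j. complex_of_real (v j)) j = of_real (poly_shift flux_poly v j)"
  by (simp add: poly_shift_flux_poly)

lemma poly_shift_flux_poly_Re:
  "Re (poly_shift (flux_poly :: complex poly) w j) = poly_shift flux_poly (\<lambda>j. Re (w j)) j"
  by (simp add: poly_shift_flux_poly)

lemma poly_flux_poly_of_real: "poly flux_poly (of_real x) = of_real (poly flux_poly x)"
  unfolding flux_poly_def poly_sum poly_monom by simp

lemma poly_stencil_poly_of_real: "poly stencil_poly (of_real x) = of_real (poly stencil_poly x)"
  unfolding stencil_poly_def poly_sum poly_monom by simp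

text \<open>As stencil_poly = (z - 1) flux_poly, the value of flux_poly at 1 is the derivative of
  stencil_poly at 1, i.e. the first moment of the stencil.\<close>
lemma poly_flux_poly_1: "poly (flux_poly :: real poly) 1 = a"
proof -
  have "pderiv (stencil_poly :: real poly) = [:-1, 1:] * pderiv flux_poly + flux_poly * pderiv [:-1, 1:]"
    by (simp only: stencil_poly_factor pderiv_mult)
  then have "poly (flux_poly :: real poly) 1 = poly (pderiv stencil_poly) 1" by (simp add: pderiv_pCons)
  also have "\<dots> = (\<Sum>i\<le>p + r. of_nat i * A (int i - int r))"
    unfolding stencil_poly_def pderiv_sum pderiv_monom poly_sum poly_monom by simp
  also have "\<dots> = a"
  proof -
    have "a = (\<Sum>i\<le>p + r. of_int (int i - int r) * A (int i - int r))"
      using first_moment_A sum_int_shift[of "\<lambda>l. of_int l * A l" r "p + r"] by simp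
    also have "\<dots> = (\<Sum>i\<le>p + r. of_nat i * A (int i - int r)) - of_nat r * (\<Sum>i\<le>p + r. A (int i - int r))"
      by (simp add: algebra_simps sum_subtractf sum_distrib_left)
    also have "(\<Sum>i\<le>p + r. A (int i - int r)) = 0"
      using sum_A sum_int_shift[of A r "p + r"] by simp
    finally show ?thesis by simp
  qed
  finally show ?thesis .
qed

lemma poly_stencil_poly_symbol:
  assumes "z \<noteq> 0"
  shows "poly stencil_poly z = z ^ r * symbol A r p z"
proof -
  have "symbol A r p z = (\<Sum>i\<le>p + r. complex_of_real (A (int i - int r)) * z powi (int i - int r))"
    unfolding symbol_def using sum_int_shift[of _ r "p + r"] by simp
  then have "z ^ r * symbol A r p z
      = (\<Sum>i\<le>p + r. complex_of_real (A (int i - int r)) * (z ^ r * z powi (int i - int r)))"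
    by (simp add: sum_distrib_left algebra_simps)
  also have "\<dots> = (\<Sum>i\<le>p + r. complex_of_real (A (int i - int r)) * z ^ i)"
  proof (intro sum.cong refl)
    fix i
    have "z powi (int r + (int i - int r)) = z powi int r * z powi (int i - int r)"
      by (rule power_int_add) (use assms in auto)
    then show "complex_of_real (A (int i - int r)) * (z ^ r * z powi (int i - int r))
        = complex_of_real (A (int i - int r)) * z ^ i"
      by (simp add: power_int_of_nat)
  qed
  finally show ?thesis unfolding stencil_poly_def poly_sum poly_monom by simp
qed

lemma flux_poly_unit_circle: "cmod z = 1 \<Longrightarrow> poly (flux_poly :: complex poly) z \<noteq> 0"
proof (cases "z = 1")
  case True
  have "poly (flux_poly :: complex poly) 1 = of_real a"
    using poly_flux_poly_of_real[of 1] poly_flux_poly_1 by simp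
  then show ?thesis using True a_nonzero by simp
next
  case False
  assume z: "cmod z = 1"
  then have "z \<noteq> 0" by auto
  have "z = cis (Arg z)" using cis_Arg[OF \<open>z \<noteq> 0\<close>] z by (simp add: sgn_div_norm)
  moreover have "Arg z \<noteq> 0" using False calculation by (metis cis_zero)
  moreover have "Arg z \<in> {-pi..pi}" using Arg_bounded[of z] by auto
  ultimately have "symbol A r p z \<noteq> 0" using symbol_nonzero by (metis Diff_iff singletonD)
  then have "poly (stencil_poly :: complex poly) z \<noteq> 0"
    using poly_stencil_poly_symbol[OF \<open>z \<noteq> 0\<close>] \<open>z \<noteq> 0\<close> by simp
  then show ?thesis unfolding stencil_poly_factor by auto
qed

lemma flux_poly_nonzero: "(flux_poly :: complex poly) \<noteq> 0"
  using flux_poly_unit_circle[of 1] by auto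

lemma flux_poly_root_free_annulus:
  obtains \<rho>1 \<rho>2 where "0 < \<rho>1" "\<rho>1 < 1" "1 < \<rho>2"
    "\<forall>z. \<rho>1 \<le> cmod z \<and> cmod z \<le> \<rho>2 \<longrightarrow> poly (flux_poly :: complex poly) z \<noteq> 0"
proof -
  define Z where "Z = {z. poly (flux_poly :: complex poly) z = 0}"
  define \<delta> where "\<delta> = Min (insert 1 ((\<lambda>z. \<bar>cmod z - 1\<bar>) ` Z))"
  have "finite Z" unfolding Z_def using poly_roots_finite[OF flux_poly_nonzero] .
  moreover have "cmod z \<noteq> 1" if "z \<in> Z" for z using that flux_poly_unit_circle unfolding Z_def by auto
  ultimately have "\<delta> > 0" "\<delta> \<le> 1" "\<And>z. z \<in> Z \<Longrightarrow> \<delta> \<le> \<bar>cmod z - 1\<bar>"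
    unfolding \<delta>_def by auto
  then show ?thesis
    by (intro that[of "1 - \<delta> / 2" "1 + \<delta> / 2"]) (force simp: Z_def)+
qed

lemma flux_poly_sign:
  assumes "\<forall>z. \<rho>1 \<le> cmod z \<and> cmod z \<le> \<rho>2 \<longrightarrow> poly (flux_poly :: complex poly) z \<noteq> 0"
    and "\<rho>1 \<le> x" "x \<le> \<rho>2" "\<rho>1 \<le> 1" "1 \<le> \<rho>2" "0 \<le> \<rho>1"
  shows "a * poly (flux_poly :: real poly) x > 0"
proof -
  have "poly (flux_poly :: real poly) y \<noteq> 0" if "\<rho>1 \<le> y" "y \<le> \<rho>2" for y
    using assms(1) poly_flux_poly_of_real[of y] that assms(6) by force
  then have "poly (flux_poly :: real poly) x * poly flux_poly 1 > 0"
    using assms(2-5) by (intro poly_same_sign) auto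
  then show ?thesis using poly_flux_poly_1 by (simp add: mult.commute)
qed

lemma flux_poly_stable_factor:
  obtains Q :: "complex poly" where "lead_coeff Q = 1" "degree Q = disc_root_count 1 flux_poly"
    "\<forall>z. poly Q z = 0 \<longrightarrow> cmod z < 1"
    "\<And>v j. \<forall>j. poly_shift (flux_poly :: real poly) v j = 0 \<Longrightarrow> v \<longlonglongrightarrow> 0 \<Longrightarrow>
       poly_shift Q (\<lambda>j. of_real (v j)) j = 0"
    "\<And>w j. \<forall>j. poly_shift Q w j = 0 \<Longrightarrow> poly_shift flux_poly w j = 0"
proof -
  obtain Q R where QR: "flux_poly = Q * R" "lead_coeff Q = 1" "degree Q = disc_root_count 1 flux_poly"
    "R \<noteq> 0" "\<forall>z. poly Q z = 0 \<longrightarrow> cmod z < 1" "\<forall>z. poly R z = 0 \<longrightarrow> cmod z > 1"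
    using poly_split_unit_circle[OF flux_poly_nonzero] flux_poly_unit_circle by metis
  show ?thesis
  proof (rule that[OF QR(2,3,5)])
    fix v :: "nat \<Rightarrow> real" and j
    assume "\<forall>j. poly_shift flux_poly v j = 0" "v \<longlonglongrightarrow> 0"
    then have "\<forall>j. poly_shift R (poly_shift Q (\<lambda>j. of_real (v j))) j = 0"
      using poly_shift_flux_poly_of_real[of v] QR(1) poly_shift_mult[of R Q] by (simp add: mult.commute)
    moreover have "(\<lambda>j. complex_of_real (v j)) \<longlonglongrightarrow> 0" using \<open>v \<longlonglongrightarrow> 0\<close> tendsto_of_real by fastforce
    ultimately show "poly_shift Q (\<lambda>j. of_real (v j)) j = 0"
      using recurrence_decaying_solution_eq_0[OF QR(4,6)] poly_shift_tendsto_0 by blast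
  next
    fix w j
    assume "\<forall>j. poly_shift Q w j = 0"
    then show "poly_shift flux_poly w j = 0"
      using QR(1) poly_shift_mult[of R Q w j] by (simp add: mult.commute poly_shift_def)
  qed
qed

lemma profile_zero: "boundary_layer_profile A r p 0 (\<lambda>_. 0)"
  unfolding boundary_layer_profile_iff by (simp add: poly_shift_def)

lemma profile_scale: "boundary_layer_profile A r p 1 w \<Longrightarrow> boundary_layer_profile A r p u (\<lambda>j. u * w j)"
  unfolding boundary_layer_profile_iff using tendsto_mult_right_zero by (auto simp: poly_shift_scale)

lemma profile_exp_decay:
  assumes "boundary_layer_profile A r p u v"
  shows "\<exists>K \<delta>. \<delta> > 0 \<and> (\<forall>j. \<bar>v j\<bar> \<le> K * exp (- \<delta> * real j))"
proof -
  obtain Q :: "complex poly" where Q: "lead_coeff Q = 1" "\<forall>z. poly Q z = 0 \<longrightarrow> cmod z < 1"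
    "\<And>j. poly_shift Q (\<lambda>j. of_real (v j)) j = 0"
    using flux_poly_stable_factor assms unfolding boundary_layer_profile_iff by metis
  then have "Q \<noteq> 0" by auto
  then have "exp_decaying (\<lambda>j. complex_of_real (v j))"
    using recurrence_solution_exp_decaying Q(2,3) by blast
  then obtain K \<nu> where K: "0 < \<nu>" "\<nu> < 1" "\<forall>j. \<bar>v j\<bar> \<le> K * \<nu> ^ j"
    unfolding exp_decaying_def by auto
  have "\<nu> ^ j = exp (- (- ln \<nu>) * real j)" for j
    using K(1) exp_of_nat_mult[of j "ln \<nu>"] by (simp add: mult.commute)
  then show ?thesis using K by (intro exI[of _ K] exI[of _ "- ln \<nu>"]) auto
qed

text \<open>With at most r stable roots, the r boundary conditions determine the profile.\<close>
lemma profile_unique: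
  assumes "disc_root_count 1 flux_poly \<le> r"
    and "boundary_layer_profile A r p u v" "boundary_layer_profile A r p u w"
  shows "v = w"
proof -
  define d where "d j = complex_of_real (v j - w j)" for j
  obtain Q :: "complex poly" where Q: "lead_coeff Q = 1" "degree Q = disc_root_count 1 flux_poly"
    "\<And>v j. \<forall>j. poly_shift (flux_poly :: real poly) v j = 0 \<Longrightarrow> v \<longlonglongrightarrow> 0 \<Longrightarrow>
       poly_shift Q (\<lambda>j. of_real (v j)) j = 0"
    using flux_poly_stable_factor by metis
  have "\<forall>j. poly_shift flux_poly (\<lambda>j. v j - w j) j = 0" "(\<lambda>j. v j - w j) \<longlonglongrightarrow> 0"
    using assms(2,3) unfolding boundary_layer_profile_iff by (auto simp: poly_shift_diff intro: tendsto_eq_intros)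
  then have "\<forall>j. poly_shift Q d j = 0" unfolding d_def using Q(3) by blast
  moreover have "\<forall>i<degree Q. d i = 0"
    using assms unfolding boundary_layer_profile_iff d_def Q(2) by auto
  ultimately have "d j = 0" for j using monic_recurrence_zero_initial[OF Q(1) refl] by blast
  then show ?thesis unfolding d_def by auto
qed

lemma profile_data_zero:
  assumes "disc_root_count 1 flux_poly + 1 = r" "boundary_layer_profile A r p u v"
  shows "u = 0"
proof -
  obtain Q :: "complex poly" where Q: "lead_coeff Q = 1" "degree Q = disc_root_count 1 flux_poly"
    "\<forall>z. poly Q z = 0 \<longrightarrow> cmod z < 1"
    "\<And>j. poly_shift Q (\<lambda>j. of_real (v j)) j = 0"
    using flux_poly_stable_factor assms(2) unfolding boundary_layer_profile_iff by metis
  have init: "\<forall>j<r. v j = - u" using assms(2) unfolding boundary_layer_profile_iff by blast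
  have "poly_shift Q (\<lambda>j. of_real (v j)) 0 = (\<Sum>i\<le>degree Q. coeff Q i * of_real (- u))"
    unfolding poly_shift_def using init assms(1) Q(2) by (intro sum.cong) auto
  also have "\<dots> = (\<Sum>i\<le>degree Q. coeff Q i) * of_real (- u)"
    by (simp only: sum_distrib_right)
  also have "(\<Sum>i\<le>degree Q. coeff Q i) = poly Q 1" by (simp add: poly_altdef)
  finally have "poly Q 1 * of_real (- u) = 0" using Q(4)[of 0] by simp
  moreover have "poly Q 1 \<noteq> 0" using Q(3) by force
  ultimately show ?thesis by simp
qed

lemma profile_exists:
  assumes "disc_root_count 1 flux_poly = r"
  shows "\<exists>v. boundary_layer_profile A r p u v"
proof -
  obtain Q :: "complex poly" where Q: "lead_coeff Q = 1" "degree Q = disc_root_count 1 flux_poly"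
    "\<forall>z. poly Q z = 0 \<longrightarrow> cmod z < 1"
    "\<And>v j. \<forall>j. poly_shift (flux_poly :: real poly) v j = 0 \<Longrightarrow> v \<longlonglongrightarrow> 0 \<Longrightarrow>
       poly_shift Q (\<lambda>j. of_real (v j)) j = 0"
    "\<And>w j. \<forall>j. poly_shift Q w j = 0 \<Longrightarrow> poly_shift flux_poly w j = 0"
    using flux_poly_stable_factor by blast
  have "degree Q = r" using Q(2) assms by simp
  then obtain w where w: "\<forall>j. poly_shift Q w j = 0" "\<forall>i<r. w i = - complex_of_real u"
    using monic_recurrence_solution_exists[OF Q(1), of r "\<lambda>_. - complex_of_real u"] by blast
  have "Q \<noteq> 0" using Q(1) by auto
  then obtain K \<nu> where K: "0 < \<nu>" "\<nu> < 1" "\<forall>j. cmod (w j) \<le> K * \<nu> ^ j"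
    using recurrence_solution_exp_decaying[OF _ Q(3) w(1)] unfolding exp_decaying_def by blast
  have "(\<lambda>j. K * \<nu> ^ j) \<longlonglongrightarrow> 0" using K by (intro tendsto_mult_right_zero LIMSEQ_power_zero) auto
  then have "w \<longlonglongrightarrow> 0"
    by (rule Lim_null_comparison[rotated]) (use K(3) in \<open>simp add: always_eventually\<close>)
  have "boundary_layer_profile A r p u (\<lambda>j. Re (w j))"
    unfolding boundary_layer_profile_iff
  proof (intro conjI allI impI)
    show "Re (w j) = - u" if "j < r" for j using w(2) that by simp
    show "poly_shift flux_poly (\<lambda>j. Re (w j)) j = 0" for j
      using poly_shift_flux_poly_Re[of w j] Q(5)[OF w(1)] by simp
    show "(\<lambda>j. Re (w j)) \<longlonglongrightarrow> 0" using tendsto_Re[OF \<open>w \<longlonglongrightarrow> 0\<close>] by simp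
  qed
  then show ?thesis by blast
qed

end

section \<open>Stability of the scheme\<close>

lemma sum_atMost_last: "(\<Sum>i\<le>(n::nat). f i) = (\<Sum>i<n. f i) + (f n :: 'a::comm_monoid_add)"
  using sum.lessThan_Suc[of f n] by (simp only: lessThan_Suc_atMost)

lemma scheme_solution_Re_Im:
  fixes W :: "int \<Rightarrow> nat \<Rightarrow> complex"
  assumes "\<And>j n. (\<Sum>\<sigma>\<le>k. of_real (\<alpha> \<sigma>) * W j (n + \<sigma>))
      + of_real lam * (\<Sum>\<sigma><k. of_real (\<beta> \<sigma>) * (\<Sum>l\<in>{- int r..int p}. of_real (A l) * W (j + l) (n + \<sigma>))) = 0"
  shows "scheme_solution A r p k \<alpha> \<beta> lam (\<lambda>j n. Re (W j n))"
    and "scheme_solution A r p k \<alpha> \<beta> lam (\<lambda>j n. Im (W j n))"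
  unfolding scheme_solution_def
  using arg_cong[OF assms, of Re] arg_cong[OF assms, of Im] by simp_all

lemma finite_support_weighted_square_sum:
  fixes f :: "int \<Rightarrow> real"
  assumes "0 \<le> w" "\<And>j. \<bar>f j\<bar> \<le> c" "\<And>j. M < \<bar>j\<bar> \<Longrightarrow> f j = 0" "0 \<le> M"
  shows "(\<lambda>j. w * (f j)\<^sup>2) summable_on UNIV" "(\<Sum>\<^sub>\<infinity>j. w * (f j)\<^sup>2) \<le> w * c\<^sup>2 * (2 * M + 1)"
proof -
  have "(\<lambda>j. w * (f j)\<^sup>2) summable_on UNIV \<longleftrightarrow> (\<lambda>j. w * (f j)\<^sup>2) summable_on {-M..M}"
    by (rule summable_on_cong_neutral) (use assms(3) in auto)
  then show "(\<lambda>j. w * (f j)\<^sup>2) summable_on UNIV" by simp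
  have "(\<Sum>\<^sub>\<infinity>j. w * (f j)\<^sup>2) = (\<Sum>\<^sub>\<infinity>j\<in>{-M..M}. w * (f j)\<^sup>2)"
    by (rule infsum_cong_neutral) (use assms(3) in auto)
  also have "\<dots> = (\<Sum>j\<in>{-M..M}. w * (f j)\<^sup>2)" by simp
  also have "\<dots> \<le> (\<Sum>j\<in>{-M..M}. w * c\<^sup>2)"
  proof (intro sum_mono mult_left_mono)
    show "(f j)\<^sup>2 \<le> c\<^sup>2" for j using assms(2)[of j] by (metis abs_ge_zero power2_abs power_mono)
  qed (use assms(1) in simp)
  also have "\<dots> = w * c\<^sup>2 * (2 * M + 1)" using assms(4) by simp
  finally show "(\<Sum>\<^sub>\<infinity>j. w * (f j)\<^sup>2) \<le> w * c\<^sup>2 * (2 * M + 1)" .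
qed

locale stable_stencil_scheme = consistent_stencil A r p a
  for A :: "int \<Rightarrow> real" and r p :: nat and a :: real +
  fixes lam :: real and k :: nat and \<alpha> \<beta> :: "nat \<Rightarrow> real"
  assumes k_pos: "k \<ge> 1" and alpha_k: "\<alpha> k = 1" and lam_pos: "lam > 0"
    and sum_alpha: "(\<Sum>\<sigma>\<le>k. \<alpha> \<sigma>) = 0"
    and sum_beta: "(\<Sum>\<sigma>\<le>k. of_nat \<sigma> * \<alpha> \<sigma>) = (\<Sum>\<sigma><k. \<beta> \<sigma>)"
    and stable: "stable_scheme A r p k \<alpha> \<beta> lam"
begin

definition scheme_next :: "(nat \<Rightarrow> int \<Rightarrow> real) \<Rightarrow> int \<Rightarrow> real" where
  "scheme_next s j = - (\<Sum>\<sigma><k. \<alpha> \<sigma> * s \<sigma> j)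
     - lam * (\<Sum>\<sigma><k. \<beta> \<sigma> * (\<Sum>l\<in>{- int r..int p}. A l * s \<sigma> (j + l)))"

definition scheme_generate :: "(nat \<Rightarrow> int \<Rightarrow> real) \<Rightarrow> int \<Rightarrow> nat \<Rightarrow> real" where
  "scheme_generate s j n = recurrence_seq k scheme_next s n j"

lemma scheme_solution_step:
  assumes "scheme_solution A r p k \<alpha> \<beta> lam u"
  shows "u j (n + k) = scheme_next (\<lambda>\<sigma> j. u j (n + \<sigma>)) j"
proof -
  have "(\<Sum>\<sigma>\<le>k. \<alpha> \<sigma> * u j (n + \<sigma>))
        + lam * (\<Sum>\<sigma><k. \<beta> \<sigma> * (\<Sum>l\<in>{- int r..int p}. A l * u (j + l) (n + \<sigma>))) = 0"
    using assms unfolding scheme_solution_def by blast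
  then show ?thesis unfolding scheme_next_def sum_atMost_last using alpha_k by (simp add: algebra_simps)
qed

lemma scheme_generate_init: "\<sigma> < k \<Longrightarrow> scheme_generate s j \<sigma> = s \<sigma> j"
  unfolding scheme_generate_def by (simp add: recurrence_seq_init)

lemma scheme_generate_solution: "scheme_solution A r p k \<alpha> \<beta> lam (scheme_generate s)"
proof -
  have "recurrence_seq k scheme_next s (n + k) = scheme_next (\<lambda>i. recurrence_seq k scheme_next s (n + i))" for n
    by (rule recurrence_seq_step) (use k_pos in \<open>auto simp: scheme_next_def\<close>)
  then show ?thesis unfolding scheme_solution_def scheme_generate_def sum_atMost_last
    by (simp add: alpha_k scheme_next_def algebra_simps)
qed

text \<open>Finite speed of propagation: one time step reaches at most p + r cells further.\<close>
lemma scheme_domain_of_dependence: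
  assumes U: "scheme_solution A r p k \<alpha> \<beta> lam U" and V: "scheme_solution A r p k \<alpha> \<beta> lam V"
    and init: "\<And>\<sigma> j. \<sigma> < k \<Longrightarrow> \<bar>j\<bar> + int \<sigma> * int (p + r) \<le> M \<Longrightarrow> V j \<sigma> = U j \<sigma>"
  shows "\<bar>j\<bar> + int n * int (p + r) \<le> M \<Longrightarrow> V j n = U j n"
proof (induction n arbitrary: j rule: less_induct)
  case (less n)
  show ?case
  proof (cases "n < k")
    case False
    then obtain n' where n': "n = n' + k" by (metis add.commute le_iff_add not_less)
    have step: "V (j + l) (n' + \<sigma>) = U (j + l) (n' + \<sigma>)"
      if "\<sigma> < k" "l \<in> {- int r..int p}" for \<sigma> l
    proof (rule less.IH)
      have "int (n' + \<sigma>) + 1 \<le> int n" using that(1) n' by simp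
      then have "(int (n' + \<sigma>) + 1) * int (p + r) \<le> int n * int (p + r)"
        by (rule mult_right_mono) simp
      then have "int (n' + \<sigma>) * int (p + r) + int (p + r) \<le> int n * int (p + r)"
        by (simp add: algebra_simps)
      moreover have "\<bar>j + l\<bar> \<le> \<bar>j\<bar> + int (p + r)" using that(2) by auto
      ultimately show "\<bar>j + l\<bar> + int (n' + \<sigma>) * int (p + r) \<le> M" using less.prems by linarith
    qed (use that n' in simp)
    moreover have "V j (n' + \<sigma>) = U j (n' + \<sigma>)" if "\<sigma> < k" for \<sigma>
      using step[OF that, of 0] by simp
    ultimately have "scheme_next (\<lambda>\<sigma> j. V j (n' + \<sigma>)) j = scheme_next (\<lambda>\<sigma> j. U j (n' + \<sigma>)) j"
      unfolding scheme_next_def by simp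
    then show ?thesis using scheme_solution_step[OF V] scheme_solution_step[OF U] n' by simp
  qed (use init less.prems in simp)
qed

lemma stable_energy_finite_support:
  obtains C where "C > 0"
    "\<And>V c M n S. scheme_solution A r p k \<alpha> \<beta> lam V \<Longrightarrow> 0 \<le> M \<Longrightarrow> finite S \<Longrightarrow>
       (\<And>\<sigma> j. \<sigma> < k \<Longrightarrow> \<bar>V j \<sigma>\<bar> \<le> c) \<Longrightarrow> (\<And>\<sigma> j. \<sigma> < k \<Longrightarrow> M < \<bar>j\<bar> \<Longrightarrow> V j \<sigma> = 0) \<Longrightarrow>
       (\<Sum>j\<in>S. (V j n)\<^sup>2) \<le> C * (real k * c\<^sup>2 * (2 * M + 1))"
proof -
  obtain C where C: "C > 0" and stab: "\<And>u. scheme_solution A r p k \<alpha> \<beta> lam u \<Longrightarrow>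
      (\<forall>\<sigma><k. (\<lambda>j. (1 / lam) * (u j \<sigma>)\<^sup>2) summable_on UNIV) \<Longrightarrow>
      (\<forall>n. (\<lambda>j. (1 / lam) * (u j n)\<^sup>2) summable_on UNIV \<and>
         (\<Sum>\<^sub>\<infinity>j. (1 / lam) * (u j n)\<^sup>2) \<le> C * (\<Sum>\<sigma><k. \<Sum>\<^sub>\<infinity>j. (1 / lam) * (u j \<sigma>)\<^sup>2))"
    using stable unfolding stable_scheme_def by (metis order_refl zero_less_one)
  show ?thesis
  proof (rule that[OF C])
    fix V c M n and S :: "int set"
    assume V: "scheme_solution A r p k \<alpha> \<beta> lam V" and "0 \<le> M" "finite S"
      and bound: "\<And>\<sigma> j. \<sigma> < k \<Longrightarrow> \<bar>V j \<sigma>\<bar> \<le> c"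
      and support: "\<And>\<sigma> j. \<sigma> < k \<Longrightarrow> M < \<bar>j\<bar> \<Longrightarrow> V j \<sigma> = 0"
    have initial: "(\<lambda>j. (1 / lam) * (V j \<sigma>)\<^sup>2) summable_on UNIV"
        "(\<Sum>\<^sub>\<infinity>j. (1 / lam) * (V j \<sigma>)\<^sup>2) \<le> (1 / lam) * c\<^sup>2 * (2 * M + 1)" if "\<sigma> < k" for \<sigma>
      using finite_support_weighted_square_sum[of "1 / lam" "\<lambda>j. V j \<sigma>" c M]
        bound[OF that] support[OF that] lam_pos \<open>0 \<le> M\<close> by simp_all
    have final: "(\<lambda>j. (1 / lam) * (V j n)\<^sup>2) summable_on UNIV \<and>
        (\<Sum>\<^sub>\<infinity>j. (1 / lam) * (V j n)\<^sup>2) \<le> C * (\<Sum>\<sigma><k. \<Sum>\<^sub>\<infinity>j. (1 / lam) * (V j \<sigma>)\<^sup>2)"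
      using stab[OF V] initial(1) by blast
    have "(1 / lam) * (\<Sum>j\<in>S. (V j n)\<^sup>2) = (\<Sum>j\<in>S. (1 / lam) * (V j n)\<^sup>2)"
      by (simp add: sum_distrib_left)
    also have "\<dots> \<le> (\<Sum>\<^sub>\<infinity>j. (1 / lam) * (V j n)\<^sup>2)"
      using final lam_pos \<open>finite S\<close> by (intro finite_sum_le_infsum) auto
    also have "\<dots> \<le> C * (\<Sum>\<sigma><k. (1 / lam) * c\<^sup>2 * (2 * M + 1))"
      using final C initial(2) by (meson mult_left_mono sum_mono less_imp_le order_trans lessThan_iff)
    also have "\<dots> = (1 / lam) * (C * (real k * c\<^sup>2 * (2 * M + 1)))" by simp
    finally show "(\<Sum>j\<in>S. (V j n)\<^sup>2) \<le> C * (real k * c\<^sup>2 * (2 * M + 1))"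
      using lam_pos by (simp add: divide_le_cancel)
  qed
qed

text \<open>Truncating bounded initial data far away does not change the solution on the cone of
  dependence, so stability bounds the local energy of solutions with merely bounded data.\<close>
lemma scheme_local_energy_bound:
  obtains C where "C > 0"
    "\<And>U c n L. scheme_solution A r p k \<alpha> \<beta> lam U \<Longrightarrow> (\<And>\<sigma> j. \<sigma> < k \<Longrightarrow> \<bar>U j \<sigma>\<bar> \<le> c) \<Longrightarrow>
       int n * int (p + r) \<le> L \<Longrightarrow> (\<Sum>j\<in>{-L..L}. (U j n)\<^sup>2) \<le> C * c\<^sup>2 * (2 * L + 1)"
proof -
  obtain C where C: "C > 0" and energy: "\<And>V c M n S. scheme_solution A r p k \<alpha> \<beta> lam V \<Longrightarrow> 0 \<le> M \<Longrightarrow>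
       finite S \<Longrightarrow> (\<And>\<sigma> j. \<sigma> < k \<Longrightarrow> \<bar>V j \<sigma>\<bar> \<le> c) \<Longrightarrow>
       (\<And>\<sigma> j. \<sigma> < k \<Longrightarrow> M < \<bar>j\<bar> \<Longrightarrow> V j \<sigma> = 0) \<Longrightarrow>
       (\<Sum>j\<in>S. (V j n)\<^sup>2) \<le> C * (real k * c\<^sup>2 * (2 * M + 1))"
    using stable_energy_finite_support by blast
  show ?thesis
  proof (rule that[of "2 * C * real k"])
    show "2 * C * real k > 0" using C k_pos by simp
    fix U c n L
    assume U: "scheme_solution A r p k \<alpha> \<beta> lam U" and bound: "\<And>\<sigma> j. \<sigma> < k \<Longrightarrow> \<bar>U j \<sigma>\<bar> \<le> c"
      and L: "int n * int (p + r) \<le> L"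
    define M where "M = L + int n * int (p + r)"
    define V where "V = scheme_generate (\<lambda>\<sigma> j. if \<bar>j\<bar> \<le> M then U j \<sigma> else 0)"
    have "0 \<le> int n * int (p + r)" by simp
    then have M: "0 \<le> M" "M \<le> 2 * L" using L unfolding M_def by linarith+
    have "0 \<le> c" using bound[of 0 0] k_pos by linarith
    have V: "scheme_solution A r p k \<alpha> \<beta> lam V" unfolding V_def by (rule scheme_generate_solution)
    have V_init: "\<sigma> < k \<Longrightarrow> V j \<sigma> = (if \<bar>j\<bar> \<le> M then U j \<sigma> else 0)" for \<sigma> j
      unfolding V_def by (rule scheme_generate_init)
    have "V j n = U j n" if "\<bar>j\<bar> \<le> L" for j
      using scheme_domain_of_dependence[OF U V, of M j n] V_init that unfolding M_def
      by (smt (verit) of_nat_0_le_iff zero_le_mult_iff)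
    then have "(\<Sum>j\<in>{-L..L}. (U j n)\<^sup>2) = (\<Sum>j\<in>{-L..L}. (V j n)\<^sup>2)" by (intro sum.cong) auto
    also have "\<dots> \<le> C * (real k * c\<^sup>2 * (2 * M + 1))"
      by (rule energy[OF V M(1)]) (use V_init bound \<open>0 \<le> c\<close> in auto)
    also have "\<dots> \<le> C * (real k * c\<^sup>2 * (2 * (2 * L + 1)))"
      using C M(2) by (intro mult_left_mono) auto
    finally show "(\<Sum>j\<in>{-L..L}. (U j n)\<^sup>2) \<le> 2 * C * real k * c\<^sup>2 * (2 * L + 1)"
      by (simp add: algebra_simps)
  qed
qed

lemma scheme_growth_bounded:
  assumes "scheme_solution A r p k \<alpha> \<beta> lam U" "scheme_solution A r p k \<alpha> \<beta> lam U'"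
    and "\<And>\<sigma> j. \<sigma> < k \<Longrightarrow> \<bar>U j \<sigma>\<bar> \<le> c" "\<And>\<sigma> j. \<sigma> < k \<Longrightarrow> \<bar>U' j \<sigma>\<bar> \<le> c"
    and "\<And>j n. (U j n)\<^sup>2 + (U' j n)\<^sup>2 = g n"
  shows "\<exists>B. \<forall>n. g n \<le> B"
proof -
  obtain C where C: "C > 0" and energy: "\<And>U c n L. scheme_solution A r p k \<alpha> \<beta> lam U \<Longrightarrow>
      (\<And>\<sigma> j. \<sigma> < k \<Longrightarrow> \<bar>U j \<sigma>\<bar> \<le> c) \<Longrightarrow> int n * int (p + r) \<le> L \<Longrightarrow>
      (\<Sum>j\<in>{-L..L}. (U j n)\<^sup>2) \<le> C * c\<^sup>2 * (2 * L + 1)"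
    using scheme_local_energy_bound by blast
  have "g n \<le> 2 * C * c\<^sup>2" for n
  proof -
    define L where "L = int n * int (p + r)"
    have "0 \<le> L" unfolding L_def by simp
    have "(2 * L + 1) * g n = (\<Sum>j\<in>{-L..L}. (U j n)\<^sup>2) + (\<Sum>j\<in>{-L..L}. (U' j n)\<^sup>2)"
      using \<open>0 \<le> L\<close> by (simp add: assms(5) sum.distrib[symmetric])
    also have "\<dots> \<le> C * c\<^sup>2 * (2 * L + 1) + C * c\<^sup>2 * (2 * L + 1)"
      using energy[OF assms(1,3), of n L] energy[OF assms(2,4), of n L] unfolding L_def by simp
    also have "\<dots> = (2 * L + 1) * (2 * C * c\<^sup>2)" by (simp add: algebra_simps)
    finally show ?thesis using \<open>0 \<le> L\<close> by (simp add: mult_le_cancel_left_pos)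
  qed
  then show ?thesis by blast
qed

definition alpha_sum :: "real \<Rightarrow> real" where "alpha_sum \<tau> = (\<Sum>\<sigma>\<le>k. \<alpha> \<sigma> * \<tau> ^ \<sigma>)"
definition beta_sum :: "real \<Rightarrow> real" where "beta_sum \<tau> = (\<Sum>\<sigma><k. \<beta> \<sigma> * \<tau> ^ \<sigma>)"

text \<open>The modes \<tau>^n \<kappa>^j with \<tau> > 1 and |\<kappa>| = 1 would grow exponentially with bounded data.\<close>
lemma von_neumann_condition:
  assumes "\<tau> > 1" "cmod \<kappa> = 1"
  shows "of_real (alpha_sum \<tau>) + of_real (lam * beta_sum \<tau>) * symbol A r p \<kappa> \<noteq> 0"
proof
  assume root: "of_real (alpha_sum \<tau>) + of_real (lam * beta_sum \<tau>) * symbol A r p \<kappa> = 0"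
  have "\<kappa> \<noteq> 0" using assms(2) by auto
  define W where "W j n = complex_of_real (\<tau> ^ n) * \<kappa> powi j" for j n
  have symbol: "(\<Sum>l\<in>{- int r..int p}. of_real (A l) * W (j + l) m) = W j m * symbol A r p \<kappa>" for j m
    unfolding W_def symbol_def using \<open>\<kappa> \<noteq> 0\<close>
    by (simp add: sum_distrib_left power_int_add algebra_simps)
  have "(\<Sum>\<sigma>\<le>k. of_real (\<alpha> \<sigma>) * W j (n + \<sigma>))
      + of_real lam * (\<Sum>\<sigma><k. of_real (\<beta> \<sigma>) * (\<Sum>l\<in>{- int r..int p}. of_real (A l) * W (j + l) (n + \<sigma>)))
      = W j n * (of_real (alpha_sum \<tau>) + of_real (lam * beta_sum \<tau>) * symbol A r p \<kappa>)" for j n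
    unfolding symbol unfolding W_def alpha_sum_def beta_sum_def
    by (simp add: sum_distrib_left sum_distrib_right power_add algebra_simps)
  then have "(\<Sum>\<sigma>\<le>k. of_real (\<alpha> \<sigma>) * W j (n + \<sigma>))
      + of_real lam * (\<Sum>\<sigma><k. of_real (\<beta> \<sigma>) * (\<Sum>l\<in>{- int r..int p}. of_real (A l) * W (j + l) (n + \<sigma>)))
      = 0" for j n
    using root by simp
  note solutions = scheme_solution_Re_Im[OF this]
  have norm_W: "cmod (W j n) = \<tau> ^ n" for j n
    unfolding W_def using assms by (simp add: norm_mult norm_power_int norm_power)
  have "\<bar>Re (W j \<sigma>)\<bar> \<le> \<tau> ^ k" "\<bar>Im (W j \<sigma>)\<bar> \<le> \<tau> ^ k" if "\<sigma> < k" for j \<sigma>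
  proof -
    have "\<tau> ^ \<sigma> \<le> \<tau> ^ k" using that assms(1) by (intro power_increasing) auto
    then show "\<bar>Re (W j \<sigma>)\<bar> \<le> \<tau> ^ k" "\<bar>Im (W j \<sigma>)\<bar> \<le> \<tau> ^ k"
      using abs_Re_le_cmod[of "W j \<sigma>"] abs_Im_le_cmod[of "W j \<sigma>"] norm_W[of j \<sigma>] by linarith+
  qed
  moreover have "(Re (W j n))\<^sup>2 + (Im (W j n))\<^sup>2 = (\<tau>\<^sup>2) ^ n" for j n
  proof -
    have "(Re (W j n))\<^sup>2 + (Im (W j n))\<^sup>2 = (\<tau> ^ n)\<^sup>2"
      using cmod_power2[of "W j n"] norm_W[of j n] by simp
    also have "\<dots> = (\<tau>\<^sup>2) ^ n" by (simp add: power_mult[symmetric] mult.commute)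
    finally show ?thesis .
  qed
  ultimately obtain B where "\<forall>n. (\<tau>\<^sup>2) ^ n \<le> B"
    using scheme_growth_bounded[OF solutions] by blast
  moreover obtain n where "B < (\<tau>\<^sup>2) ^ n"
    using real_arch_pow[of "\<tau>\<^sup>2" B] assms(1) by (metis less_1_mult power2_eq_square)
  ultimately show False by (meson not_le)
qed

text \<open>Otherwise u_j^n = n would be a solution with bounded initial data.\<close>
lemma sum_beta_nonzero: "(\<Sum>\<sigma><k. \<beta> \<sigma>) \<noteq> 0"
proof
  assume "(\<Sum>\<sigma><k. \<beta> \<sigma>) = 0"
  define U where "U j n = real n" for j :: int and n :: nat
  have "(\<Sum>\<sigma>\<le>k. \<alpha> \<sigma> * U j (n + \<sigma>)) = real n * (\<Sum>\<sigma>\<le>k. \<alpha> \<sigma>) + (\<Sum>\<sigma>\<le>k. of_nat \<sigma> * \<alpha> \<sigma>)" for j n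
    unfolding U_def by (simp add: sum.distrib sum_distrib_left algebra_simps)
  moreover have "(\<Sum>l\<in>{- int r..int p}. A l * U (j + l) m) = 0" for j m
    unfolding U_def using sum_A by (simp add: sum_distrib_right[symmetric] mult.commute)
  ultimately have "scheme_solution A r p k \<alpha> \<beta> lam U"
    unfolding scheme_solution_def using sum_alpha sum_beta \<open>(\<Sum>\<sigma><k. \<beta> \<sigma>) = 0\<close> by simp
  moreover have "scheme_solution A r p k \<alpha> \<beta> lam (\<lambda>_ _. 0)" unfolding scheme_solution_def by simp
  moreover have "\<bar>U j \<sigma>\<bar> \<le> real k" if "\<sigma> < k" for j \<sigma> using that unfolding U_def by simp
  ultimately obtain B where B: "\<forall>n. (real n)\<^sup>2 \<le> B"
    using scheme_growth_bounded[of U "\<lambda>_ _. 0" "real k" "\<lambda>n. (real n)\<^sup>2"] unfolding U_def by auto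
  obtain n :: nat where "B < real n" using reals_Archimedean2 by blast
  moreover have "real n \<le> (real n)\<^sup>2" by (cases n) (auto simp: power2_eq_square)
  ultimately show False using B by (meson not_le order_le_less_trans)
qed

section \<open>The characteristic equation and the number of stable roots\<close>

text \<open>Looking for solutions \<tau>^n \<kappa>^j of the scheme leads, for fixed \<tau>, to the roots \<kappa> of
  char_poly \<tau> \<kappa> = \<kappa>^r (alpha_sum \<tau> + lam beta_sum \<tau> symbol \<kappa>).\<close>
definition char_poly :: "real \<Rightarrow> 'b::{real_algebra_1,comm_ring_1} poly" where
  "char_poly \<tau> = smult (of_real (alpha_sum \<tau>)) ([:0, 1:] ^ r) + smult (of_real (lam * beta_sum \<tau>)) stencil_poly"

lemma poly_char_poly:
  "poly (char_poly \<tau>) z = of_real (alpha_sum \<tau>) * z ^ r + of_real (lam * beta_sum \<tau>) * poly stencil_poly z"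
  unfolding char_poly_def by simp

lemma poly_char_poly_of_real: "poly (char_poly \<tau>) (of_real x) = of_real (poly (char_poly \<tau>) x)"
  by (simp add: poly_char_poly poly_stencil_poly_of_real)

lemma char_poly_unit_circle:
  assumes "\<tau> > 1" "cmod \<kappa> = 1"
  shows "poly (char_poly \<tau>) \<kappa> \<noteq> 0"
proof -
  have "\<kappa> \<noteq> 0" using assms by auto
  then have "poly (char_poly \<tau>) \<kappa> = \<kappa> ^ r * (of_real (alpha_sum \<tau>) + of_real (lam * beta_sum \<tau>) * symbol A r p \<kappa>)"
    by (simp add: poly_char_poly poly_stencil_poly_symbol algebra_simps)
  then show ?thesis using von_neumann_condition[OF assms] \<open>\<kappa> \<noteq> 0\<close> by simp
qed

definition stencil_abs :: "real \<Rightarrow> real" where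
  "stencil_abs \<rho> = (\<Sum>i\<le>p + r. \<bar>A (int i - int r)\<bar> * \<rho> ^ i)"

lemma norm_poly_stencil_poly_le: "cmod (poly stencil_poly z) \<le> stencil_abs (cmod z)"
proof -
  have "cmod (poly stencil_poly z) = cmod (\<Sum>i\<le>p + r. complex_of_real (A (int i - int r)) * z ^ i)"
    unfolding stencil_poly_def poly_sum poly_monom by simp
  also have "\<dots> \<le> (\<Sum>i\<le>p + r. cmod (complex_of_real (A (int i - int r)) * z ^ i))" by (rule norm_sum)
  also have "\<dots> = stencil_abs (cmod z)" unfolding stencil_abs_def by (simp add: norm_mult norm_power)
  finally show ?thesis .
qed

lemma stencil_abs_nonneg: "\<rho> \<ge> 0 \<Longrightarrow> stencil_abs \<rho> \<ge> 0"
  unfolding stencil_abs_def by (intro sum_nonneg mult_nonneg_nonneg) auto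

lemma norm_char_poly_diff_le:
  assumes "cmod z = \<rho>"
  shows "cmod (poly (char_poly \<tau>) z - poly (char_poly \<tau>0) z)
    \<le> \<bar>alpha_sum \<tau> - alpha_sum \<tau>0\<bar> * \<rho> ^ r + lam * \<bar>beta_sum \<tau> - beta_sum \<tau>0\<bar> * stencil_abs \<rho>"
proof -
  have "poly (char_poly \<tau>) z - poly (char_poly \<tau>0) z
      = of_real (alpha_sum \<tau> - alpha_sum \<tau>0) * z ^ r + of_real (lam * (beta_sum \<tau> - beta_sum \<tau>0)) * poly stencil_poly z"
    unfolding poly_char_poly by (simp add: algebra_simps)
  also have "cmod \<dots> \<le> \<bar>alpha_sum \<tau> - alpha_sum \<tau>0\<bar> * \<rho> ^ r + lam * \<bar>beta_sum \<tau> - beta_sum \<tau>0\<bar> * stencil_abs \<rho>"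
  proof (rule order_trans[OF norm_triangle_ineq add_mono])
    show "cmod (of_real (alpha_sum \<tau> - alpha_sum \<tau>0) * z ^ r) \<le> \<bar>alpha_sum \<tau> - alpha_sum \<tau>0\<bar> * \<rho> ^ r"
      using assms by (simp only: norm_mult norm_of_real norm_power)
    have "cmod (of_real (lam * (beta_sum \<tau> - beta_sum \<tau>0)) * poly stencil_poly z)
        = lam * \<bar>beta_sum \<tau> - beta_sum \<tau>0\<bar> * cmod (poly stencil_poly z)"
      using lam_pos by (simp only: norm_mult norm_of_real abs_mult)
    also have "\<dots> \<le> lam * \<bar>beta_sum \<tau> - beta_sum \<tau>0\<bar> * stencil_abs \<rho>"
      using norm_poly_stencil_poly_le[of z] assms lam_pos by (intro mult_left_mono) auto
    finally show "cmod (of_real (lam * (beta_sum \<tau> - beta_sum \<tau>0)) * poly stencil_poly z)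
        \<le> lam * \<bar>beta_sum \<tau> - beta_sum \<tau>0\<bar> * stencil_abs \<rho>" .
  qed
  finally show ?thesis .
qed

lemma isCont_alpha_sum: "isCont alpha_sum x"
  unfolding alpha_sum_def[abs_def] by (intro continuous_intros)

lemma isCont_beta_sum: "isCont beta_sum x"
  unfolding beta_sum_def[abs_def] by (intro continuous_intros)

lemma char_poly_count_locally_constant:
  assumes "\<rho> > 0" "\<forall>z. cmod z = \<rho> \<longrightarrow> poly (char_poly \<tau>0) z \<noteq> 0"
  shows "\<forall>\<^sub>F \<tau> in nhds \<tau>0. disc_root_count \<rho> (char_poly \<tau>) = disc_root_count \<rho> (char_poly \<tau>0)"
proof -
  obtain m where m: "m > 0" "\<forall>z. cmod z = \<rho> \<longrightarrow> m \<le> cmod (poly (char_poly \<tau>0) z)"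
    using poly_sphere_lower_bound[OF assms] by blast
  define dev where
    "dev \<tau> = \<bar>alpha_sum \<tau> - alpha_sum \<tau>0\<bar> * \<rho> ^ r + lam * \<bar>beta_sum \<tau> - beta_sum \<tau>0\<bar> * stencil_abs \<rho>" for \<tau>
  have "isCont dev \<tau>0" unfolding dev_def
    using isCont_alpha_sum isCont_beta_sum by (intro continuous_intros) auto
  then have "\<forall>\<^sub>F \<tau> in at \<tau>0. dev \<tau> < m"
    using m(1) by (intro order_tendstoD(2)[of dev]) (auto simp: isCont_def dev_def)
  then have "\<forall>\<^sub>F \<tau> in nhds \<tau>0. dev \<tau> < m" using m(1) by (simp add: eventually_nhds_conv_at dev_def)
  then show ?thesis
  proof (rule eventually_mono)
    fix \<tau> assume "dev \<tau> < m"
    show "disc_root_count \<rho> (char_poly \<tau>) = disc_root_count \<rho> (char_poly \<tau>0)"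
    proof (rule disc_root_count_rouche[OF assms(1)], intro allI impI)
      fix z :: complex assume z: "cmod z = \<rho>"
      have "cmod (poly (char_poly \<tau>) z - poly (char_poly \<tau>0) z) \<le> dev \<tau>"
        unfolding dev_def by (rule norm_char_poly_diff_le[OF z])
      also have "\<dots> < m" by fact
      also have "\<dots> \<le> cmod (poly (char_poly \<tau>0) z)" using m z by blast
      finally show "cmod (poly (char_poly \<tau>) z - poly (char_poly \<tau>0) z) < cmod (poly (char_poly \<tau>0) z)" .
    qed
  qed
qed

text \<open>By the von Neumann condition no root crosses the unit circle while \<tau> > 1.\<close>
lemma char_poly_count_constant:
  assumes "\<tau>1 > 1" "\<tau>2 > 1"
  shows "disc_root_count 1 (char_poly \<tau>1) = disc_root_count 1 (char_poly \<tau>2)"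
proof -
  have "(\<lambda>\<tau>. disc_root_count 1 (char_poly \<tau>)) constant_on {1<..}"
  proof (rule locally_constant_imp_constant)
    fix \<tau>0 :: real assume "\<tau>0 \<in> {1<..}"
    then have "\<forall>\<^sub>F \<tau> in nhds \<tau>0. disc_root_count 1 (char_poly \<tau>) = disc_root_count 1 (char_poly \<tau>0)"
      by (intro char_poly_count_locally_constant) (auto simp: char_poly_unit_circle)
    then obtain S where S: "open S" "\<tau>0 \<in> S"
      "\<forall>\<tau>\<in>S. disc_root_count 1 (char_poly \<tau>) = disc_root_count 1 (char_poly \<tau>0)"
      unfolding eventually_nhds by blast
    show "\<exists>T. openin (top_of_set {1<..}) T \<and> \<tau>0 \<in> T \<and>
        (\<forall>\<tau>\<in>T. disc_root_count 1 (char_poly \<tau>) = disc_root_count 1 (char_poly \<tau>0))"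
    proof (intro exI conjI)
      show "openin (top_of_set {1<..}) ({1<..} \<inter> S)" using S(1) by (rule openin_open_Int)
      show "\<tau>0 \<in> {1<..} \<inter> S" using S(2) \<open>\<tau>0 \<in> {1<..}\<close> by blast
      show "\<forall>\<tau>\<in>{1<..} \<inter> S. disc_root_count 1 (char_poly \<tau>) = disc_root_count 1 (char_poly \<tau>0)"
        using S(3) by blast
    qed
  qed simp
  then obtain c where "\<forall>\<tau>\<in>{1<..}. disc_root_count 1 (char_poly \<tau>) = c"
    unfolding constant_on_def by blast
  then show ?thesis using assms by simp
qed

text \<open>For large \<tau> the monomial term dominates, and it has its r roots at the origin.\<close>
lemma alpha_sum_dominates: "\<exists>\<tau>>1. lam * \<bar>beta_sum \<tau>\<bar> * stencil_abs 1 < \<bar>alpha_sum \<tau>\<bar>"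
proof -
  define S\<alpha> where "S\<alpha> = (\<Sum>\<sigma><k. \<bar>\<alpha> \<sigma>\<bar>)"
  define S\<beta> where "S\<beta> = (\<Sum>\<sigma><k. \<bar>\<beta> \<sigma>\<bar>)"
  define \<tau> where "\<tau> = S\<alpha> + lam * S\<beta> * stencil_abs 1 + 2"
  have "S\<alpha> \<ge> 0" "S\<beta> \<ge> 0" unfolding S\<alpha>_def S\<beta>_def by (auto intro: sum_nonneg)
  moreover have "stencil_abs 1 \<ge> 0" by (rule stencil_abs_nonneg) simp
  ultimately have SS: "lam * S\<beta> * stencil_abs 1 \<ge> 0" using lam_pos by simp
  then have "\<tau> > 1" unfolding \<tau>_def using \<open>S\<alpha> \<ge> 0\<close> by linarith
  have low: "\<bar>\<Sum>\<sigma><k. c \<sigma> * \<tau> ^ \<sigma>\<bar> \<le> (\<Sum>\<sigma><k. \<bar>c \<sigma>\<bar>) * \<tau> ^ (k - 1)" for c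
  proof -
    have "\<bar>\<Sum>\<sigma><k. c \<sigma> * \<tau> ^ \<sigma>\<bar> \<le> (\<Sum>\<sigma><k. \<bar>c \<sigma>\<bar> * \<tau> ^ (k - 1))"
      by (rule order_trans[OF sum_abs sum_mono])
        (use \<open>\<tau> > 1\<close> in \<open>auto simp: abs_mult intro!: mult_left_mono power_increasing\<close>)
    then show ?thesis by (simp add: sum_distrib_right)
  qed
  have "\<tau> ^ k = \<tau> * \<tau> ^ (k - 1)" using k_pos by (simp flip: power_Suc)
  moreover have "alpha_sum \<tau> = \<tau> ^ k + (\<Sum>\<sigma><k. \<alpha> \<sigma> * \<tau> ^ \<sigma>)"
    unfolding alpha_sum_def sum_atMost_last using alpha_k by simp
  ultimately have "\<bar>alpha_sum \<tau>\<bar> \<ge> \<tau> ^ (k - 1) * (\<tau> - S\<alpha>)"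
    using low[of \<alpha>] unfolding S\<alpha>_def by (simp add: algebra_simps)
  moreover have "\<tau> ^ (k - 1) * (\<tau> - S\<alpha>) = \<tau> ^ (k - 1) * (lam * S\<beta> * stencil_abs 1) + 2 * \<tau> ^ (k - 1)"
    unfolding \<tau>_def by (simp add: algebra_simps)
  moreover have "lam * \<bar>beta_sum \<tau>\<bar> * stencil_abs 1 \<le> \<tau> ^ (k - 1) * (lam * S\<beta> * stencil_abs 1)"
  proof -
    have "lam * \<bar>beta_sum \<tau>\<bar> * stencil_abs 1 \<le> lam * (S\<beta> * \<tau> ^ (k - 1)) * stencil_abs 1"
      using low[of \<beta>] lam_pos \<open>stencil_abs 1 \<ge> 0\<close> unfolding beta_sum_def S\<beta>_def
      by (intro mult_right_mono mult_left_mono) auto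
    then show ?thesis by (simp add: algebra_simps)
  qed
  moreover have "\<tau> ^ (k - 1) > 0" using \<open>\<tau> > 1\<close> by simp
  ultimately show ?thesis using \<open>\<tau> > 1\<close> by (intro exI[of _ \<tau>]) linarith
qed

lemma char_poly_count_large: "\<exists>\<tau>>1. disc_root_count 1 (char_poly \<tau>) = r"
proof -
  obtain \<tau> where "\<tau> > 1" and dom: "lam * \<bar>beta_sum \<tau>\<bar> * stencil_abs 1 < \<bar>alpha_sum \<tau>\<bar>"
    using alpha_sum_dominates by blast
  have "alpha_sum \<tau> \<noteq> 0"
    using dom lam_pos stencil_abs_nonneg[of 1] by (smt (verit) mult_nonneg_nonneg abs_ge_zero)
  have "disc_root_count 1 (char_poly \<tau>) = disc_root_count 1 (smult (of_real (alpha_sum \<tau>)) ([:0, 1:] ^ r))"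
  proof (rule disc_root_count_rouche, simp, intro allI impI)
    fix z :: complex assume z: "cmod z = 1"
    have "cmod (poly (char_poly \<tau>) z - poly (smult (of_real (alpha_sum \<tau>)) ([:0, 1:] ^ r)) z)
        = lam * \<bar>beta_sum \<tau>\<bar> * cmod (poly stencil_poly z)"
      using lam_pos by (simp add: poly_char_poly poly_monom norm_mult abs_mult)
    also have "\<dots> \<le> lam * \<bar>beta_sum \<tau>\<bar> * stencil_abs 1"
      using norm_poly_stencil_poly_le[of z] z lam_pos by (simp add: mult_left_mono)
    also have "\<dots> < cmod (poly (smult (of_real (alpha_sum \<tau>)) ([:0, 1:] ^ r)) z)"
      using dom z by (simp add: norm_mult norm_power)
    finally show "cmod (poly (char_poly \<tau>) z - poly (smult (of_real (alpha_sum \<tau>)) ([:0, 1:] ^ r)) z)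
        < cmod (poly (smult (of_real (alpha_sum \<tau>)) ([:0, 1:] ^ r)) z)" .
  qed
  also have "\<dots> = r" using \<open>alpha_sum \<tau> \<noteq> 0\<close> by (simp add: disc_root_count_smult disc_root_count_monomial)
  finally show ?thesis using \<open>\<tau> > 1\<close> by blast
qed

definition alpha_quot :: "real \<Rightarrow> real" where
  "alpha_quot \<tau> = (\<Sum>\<sigma>\<le>k. \<alpha> \<sigma> * (\<Sum>i<\<sigma>. \<tau> ^ i))"

lemma alpha_sum_factor: "alpha_sum \<tau> = (\<tau> - 1) * alpha_quot \<tau>"
proof -
  have "alpha_sum \<tau> = (\<Sum>\<sigma>\<le>k. \<alpha> \<sigma> * (\<tau> ^ \<sigma> - 1))"
    using sum_alpha by (simp add: alpha_sum_def sum_subtractf algebra_simps)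
  also have "\<dots> = (\<tau> - 1) * alpha_quot \<tau>"
    unfolding alpha_quot_def power_diff_1_eq by (simp add: sum_distrib_left algebra_simps)
  finally show ?thesis .
qed

lemma alpha_quot_1: "alpha_quot 1 = (\<Sum>\<sigma><k. \<beta> \<sigma>)"
  unfolding alpha_quot_def using sum_beta by (simp add: mult.commute)

lemma isCont_alpha_quot: "isCont alpha_quot x"
  unfolding alpha_quot_def[abs_def] by (intro continuous_intros)

lemma char_poly_at_1: "char_poly 1 = smult (of_real (lam * (\<Sum>\<sigma><k. \<beta> \<sigma>))) ([:-1, 1:] * flux_poly)"
  unfolding char_poly_def stencil_poly_factor using sum_alpha by (simp add: alpha_sum_def beta_sum_def)

lemma poly_char_poly_1: "poly (char_poly \<tau>) 1 = (of_real (alpha_sum \<tau>) :: 'b::{real_algebra_1,comm_ring_1})"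
  by (simp add: poly_char_poly stencil_poly_factor)

lemma char_poly_counts_near_1:
  assumes "0 < \<rho>1" "\<rho>1 < 1" "1 < \<rho>2"
    and annulus: "\<forall>z. \<rho>1 \<le> cmod z \<and> cmod z \<le> \<rho>2 \<longrightarrow> poly (flux_poly :: complex poly) z \<noteq> 0"
  shows "\<forall>\<^sub>F \<tau> in at_right 1. disc_root_count \<rho>1 (char_poly \<tau>) = disc_root_count 1 flux_poly \<and>
     disc_root_count \<rho>2 (char_poly \<tau>) = disc_root_count 1 flux_poly + 1"
proof -
  have lam_B: "lam * (\<Sum>\<sigma><k. \<beta> \<sigma>) \<noteq> 0" using lam_pos sum_beta_nonzero by simp
  then have lam_B': "(of_real (lam * (\<Sum>\<sigma><k. \<beta> \<sigma>)) :: complex) \<noteq> 0" by (metis of_real_eq_0_iff)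
  then have at_1: "disc_root_count \<rho> (char_poly 1) = disc_root_count \<rho> flux_poly + (if 1 < \<rho> then 1 else 0)"
    for \<rho>
    unfolding char_poly_at_1 disc_root_count_smult[OF lam_B']
      disc_root_count_linear_factor[OF flux_poly_nonzero] by simp
  have inner: "disc_root_count \<rho>1 flux_poly = disc_root_count 1 flux_poly"
    by (rule disc_root_count_eqI) (use annulus assms in auto)
  have outer: "disc_root_count 1 flux_poly = disc_root_count \<rho>2 flux_poly"
    by (rule disc_root_count_eqI) (use annulus assms in auto)
  have near: "\<forall>\<^sub>F \<tau> in nhds 1. disc_root_count \<rho> (char_poly \<tau>) = disc_root_count \<rho> (char_poly 1)"
    if "\<rho> = \<rho>1 \<or> \<rho> = \<rho>2" for \<rho>
  proof (rule char_poly_count_locally_constant)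
    show "\<rho> > 0" using that assms by auto
    show "\<forall>z. cmod z = \<rho> \<longrightarrow> poly (char_poly 1) z \<noteq> 0"
    proof (intro allI impI)
      fix z :: complex assume "cmod z = \<rho>"
      then have "z \<noteq> 1" "poly flux_poly z \<noteq> 0" using that assms annulus by auto
      then have "poly ([:-1, 1:] * flux_poly) z \<noteq> 0" by simp
      then show "poly (char_poly 1) z \<noteq> 0"
        unfolding char_poly_at_1 poly_smult using lam_B' by (metis mult_eq_0_iff)
    qed
  qed
  have "\<forall>\<^sub>F \<tau> in nhds 1. disc_root_count \<rho>1 (char_poly \<tau>) = disc_root_count 1 flux_poly \<and>
      disc_root_count \<rho>2 (char_poly \<tau>) = disc_root_count 1 flux_poly + 1"
    using eventually_conj[OF near[of \<rho>1] near[of \<rho>2]]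
    by (rule eventually_mono) (use at_1[of \<rho>1] at_1[of \<rho>2] inner outer assms in auto)
  then show ?thesis by (simp add: eventually_nhds_conv_at eventually_at_split)
qed

lemma sum_beta_square_pos: "(\<Sum>\<sigma><k. \<beta> \<sigma>) * (\<Sum>\<sigma><k. \<beta> \<sigma>) > 0"
  using sum_beta_nonzero by (metis mult_pos_pos mult_neg_neg linorder_neqE_linordered_idom)

lemma char_poly_1_sign:
  assumes "(\<rho> - 1) * poly (flux_poly :: real poly) \<rho> < 0"
  shows "(\<Sum>\<sigma><k. \<beta> \<sigma>) * poly (char_poly 1) \<rho> < 0"
proof -
  define B where "B = (\<Sum>\<sigma><k. \<beta> \<sigma>)"
  have "lam * (B * B) > 0" using lam_pos sum_beta_square_pos unfolding B_def by simp
  then have neg: "(lam * (B * B)) * ((\<rho> - 1) * poly flux_poly \<rho>) < 0" using assms by (simp add: mult_pos_neg)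
  have "B * poly (char_poly 1) \<rho> = (lam * (B * B)) * ((\<rho> - 1) * poly flux_poly \<rho>)"
    unfolding char_poly_at_1 B_def by (simp add: algebra_simps)
  then show ?thesis using neg unfolding B_def by linarith
qed

text \<open>The value at 1 is alpha_sum \<tau> = (\<tau> - 1) alpha_quot \<tau>, and alpha_quot 1 = \<Sum> \<beta> by (A2).\<close>
lemma char_poly_sign_at_1: "\<forall>\<^sub>F \<tau> in at_right 1. (\<Sum>\<sigma><k. \<beta> \<sigma>) * poly (char_poly \<tau>) (1 :: real) > 0"
proof -
  define B where "B = (\<Sum>\<sigma><k. \<beta> \<sigma>)"
  have "isCont (\<lambda>\<tau>. B * alpha_quot \<tau>) 1" using isCont_alpha_quot by (intro continuous_intros)
  moreover have "B * alpha_quot 1 > 0" using sum_beta_square_pos by (simp add: alpha_quot_1 B_def)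
  ultimately have "\<forall>\<^sub>F \<tau> in at 1. B * alpha_quot \<tau> > 0"
    unfolding isCont_def by (rule order_tendstoD(1))
  then have "\<forall>\<^sub>F \<tau> in at_right 1. B * alpha_quot \<tau> > 0" by (simp add: eventually_at_split)
  then have "\<forall>\<^sub>F \<tau> in at_right 1. B * alpha_quot \<tau> > 0 \<and> 1 < \<tau>"
    using eventually_at_right_less by (rule eventually_conj)
  then show ?thesis
  proof (rule eventually_mono, elim conjE)
    fix \<tau> :: real assume "B * alpha_quot \<tau> > 0" "1 < \<tau>"
    then have "(\<tau> - 1) * (B * alpha_quot \<tau>) > 0" by simp
    then show "(\<Sum>\<sigma><k. \<beta> \<sigma>) * poly (char_poly \<tau>) 1 > 0"
      by (simp add: poly_char_poly_1 alpha_sum_factor mult.left_commute B_def)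
  qed
qed

text \<open>The root 1 of char_poly 1 moves for \<tau> slightly above 1 along the real axis, into the
  unit disc if a > 0 and out of it if a < 0: compare signs at 1 and at the edge of the annulus.\<close>
lemma char_poly_real_root_near_1:
  assumes "0 < \<rho>1" "\<rho>1 < 1" "1 < \<rho>2"
    and annulus: "\<forall>z. \<rho>1 \<le> cmod z \<and> cmod z \<le> \<rho>2 \<longrightarrow> poly (flux_poly :: complex poly) z \<noteq> 0"
  shows "\<forall>\<^sub>F \<tau> in at_right 1. \<exists>x. poly (char_poly \<tau>) x = 0 \<and> \<rho>1 < x \<and> x < \<rho>2 \<and> (x < 1 \<longleftrightarrow> a > 0)"
proof -
  define B where "B = (\<Sum>\<sigma><k. \<beta> \<sigma>)"
  define \<rho> where "\<rho> = (if a > 0 then \<rho>1 else \<rho>2)"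
  have \<rho>: "\<rho>1 \<le> \<rho>" "\<rho> \<le> \<rho>2" "\<rho> < 1 \<longleftrightarrow> a > 0" "\<rho> \<noteq> 1" using assms a_nonzero unfolding \<rho>_def by auto
  have "a * poly flux_poly \<rho> > 0" by (rule flux_poly_sign[OF annulus]) (use \<rho> assms in auto)
  then have "(\<rho> - 1) * poly (flux_poly :: real poly) \<rho> < 0"
    using \<rho>(3,4) a_nonzero by (auto simp: zero_less_mult_iff mult_less_0_iff)
  then have "B * poly (char_poly 1) \<rho> < 0" unfolding B_def by (rule char_poly_1_sign)
  moreover have "isCont (\<lambda>\<tau>. B * poly (char_poly \<tau>) \<rho>) 1"
    unfolding poly_char_poly using isCont_alpha_sum isCont_beta_sum by (intro continuous_intros) auto
  ultimately have "\<forall>\<^sub>F \<tau> in at 1. B * poly (char_poly \<tau>) \<rho> < 0"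
    unfolding isCont_def by (rule order_tendstoD(2)[rotated])
  then have "\<forall>\<^sub>F \<tau> in at_right 1. B * poly (char_poly \<tau>) \<rho> < 0" by (simp add: eventually_at_split)
  then have "\<forall>\<^sub>F \<tau> in at_right 1. B * poly (char_poly \<tau>) \<rho> < 0 \<and> B * poly (char_poly \<tau>) 1 > 0"
    using char_poly_sign_at_1 unfolding B_def by (rule eventually_conj)
  then show ?thesis
  proof (rule eventually_mono, elim conjE)
    fix \<tau> :: real assume "B * poly (char_poly \<tau>) \<rho> < 0" "B * poly (char_poly \<tau>) 1 > 0"
    then have "B * B * (poly (char_poly \<tau>) \<rho> * poly (char_poly \<tau>) 1) < 0"
      by (metis mult.assoc mult.left_commute mult_neg_pos)
    then have "poly (char_poly \<tau>) \<rho> * poly (char_poly \<tau>) 1 < 0"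
      using sum_beta_square_pos unfolding B_def by (simp add: mult_less_0_iff)
    then obtain x where "min \<rho> 1 < x" "x < max \<rho> 1" "poly (char_poly \<tau>) x = 0"
      by (rule poly_root_between)
    then show "\<exists>x. poly (char_poly \<tau>) x = 0 \<and> \<rho>1 < x \<and> x < \<rho>2 \<and> (x < 1 \<longleftrightarrow> a > 0)"
      using \<rho> assms by (intro exI[of _ x]) (auto simp: \<rho>_def split: if_splits)
  qed
qed

lemma flux_poly_disc_root_count: "disc_root_count 1 flux_poly + (if a > 0 then 1 else 0) = r"
proof -
  obtain \<rho>1 \<rho>2 where \<rho>: "0 < \<rho>1" "\<rho>1 < 1" "1 < \<rho>2"
    and annulus: "\<forall>z. \<rho>1 \<le> cmod z \<and> cmod z \<le> \<rho>2 \<longrightarrow> poly (flux_poly :: complex poly) z \<noteq> 0"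
    by (rule flux_poly_root_free_annulus)
  have "\<forall>\<^sub>F \<tau> in at_right 1. (disc_root_count \<rho>1 (char_poly \<tau>) = disc_root_count 1 flux_poly \<and>
      disc_root_count \<rho>2 (char_poly \<tau>) = disc_root_count 1 flux_poly + 1) \<and>
      (\<exists>x. poly (char_poly \<tau>) x = 0 \<and> \<rho>1 < x \<and> x < \<rho>2 \<and> (x < 1 \<longleftrightarrow> a > 0)) \<and> 1 < \<tau>"
    by (rule eventually_conj[OF char_poly_counts_near_1[OF \<rho> annulus]
          eventually_conj[OF char_poly_real_root_near_1[OF \<rho> annulus] eventually_at_right_less]])
  then obtain \<tau> x where counts: "disc_root_count \<rho>1 (char_poly \<tau>) = disc_root_count 1 flux_poly"
      "disc_root_count \<rho>2 (char_poly \<tau>) = disc_root_count 1 flux_poly + 1"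
    and x: "poly (char_poly \<tau>) x = 0" "\<rho>1 < x" "x < \<rho>2" "x < 1 \<longleftrightarrow> a > 0" and "1 < \<tau>"
    using eventually_happens'[of "at_right (1::real)"] by force
  have "(char_poly \<tau> :: complex poly) \<noteq> 0" using char_poly_unit_circle[OF \<open>1 < \<tau>\<close>, of 1] by auto
  moreover have "poly (char_poly \<tau>) (complex_of_real x) = 0" using x(1) by (simp add: poly_char_poly_of_real)
  ultimately have "disc_root_count 1 (char_poly \<tau>)
      = disc_root_count \<rho>1 (char_poly \<tau>) + (if cmod (complex_of_real x) < 1 then 1 else 0)"
    using counts \<rho> x by (intro disc_root_count_single_root) auto
  moreover obtain \<tau>' where "\<tau>' > 1" "disc_root_count 1 (char_poly \<tau>') = r"
    using char_poly_count_large by blast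
  ultimately show ?thesis
    using char_poly_count_constant[OF \<open>1 < \<tau>\<close>, of \<tau>'] counts x \<rho> by auto
qed

lemma profiles_positive_speed:
  assumes "a > 0"
  shows "C_num A r p = {0} \<and> (\<forall>v. boundary_layer_profile A r p 0 v \<longleftrightarrow> v = (\<lambda>_. 0))"
proof -
  have count: "disc_root_count 1 flux_poly + 1 = r" using flux_poly_disc_root_count assms by simp
  have "u = 0" if "boundary_layer_profile A r p u v" for u v using profile_data_zero[OF count that] .
  moreover have "v = (\<lambda>_. 0)" if "boundary_layer_profile A r p 0 v" for v
    using profile_unique[OF _ that profile_zero] count by simp
  ultimately show ?thesis using profile_zero unfolding C_num_def by blast
qed

lemma profiles_negative_speed:
  assumes "a < 0"
  shows "C_num A r p = UNIV \<and>
    (\<forall>u. \<exists>!v. boundary_layer_profile A r p u v) \<and>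
    (\<forall>u v. boundary_layer_profile A r p u v \<longrightarrow> (\<exists>K \<delta>. \<delta> > 0 \<and> (\<forall>j. \<bar>v j\<bar> \<le> K * exp (- \<delta> * real j)))) \<and>
    (\<forall>u v w. boundary_layer_profile A r p u v \<longrightarrow> boundary_layer_profile A r p 1 w \<longrightarrow> (\<forall>j. v j = u * w j))"
proof -
  have count: "disc_root_count 1 flux_poly = r" using flux_poly_disc_root_count assms by simp
  have unique: "v = w" if "boundary_layer_profile A r p u v" "boundary_layer_profile A r p u w" for u v w
    using profile_unique[OF _ that] count by simp
  show ?thesis
  proof (intro conjI allI impI)
    show "C_num A r p = UNIV" unfolding C_num_def using profile_exists[OF count] by blast
    show "\<exists>!v. boundary_layer_profile A r p u v" for u using profile_exists[OF count] unique by blast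
    show "\<exists>K \<delta>. \<delta> > 0 \<and> (\<forall>j. \<bar>v j\<bar> \<le> K * exp (- \<delta> * real j))"
      if "boundary_layer_profile A r p u v" for u v using profile_exp_decay[OF that] .
    show "v j = u * w j" if "boundary_layer_profile A r p u v" "boundary_layer_profile A r p 1 w" for u v w j
      using unique[OF that(1) profile_scale[OF that(2)]] by simp
  qed
qed

end

theorem proposition2p7:
  fixes a lam :: real and A :: "int \<Rightarrow> real" and p r k :: nat
    and \<alpha> \<beta> :: "nat \<Rightarrow> real"
  assumes "a \<noteq> 0"
    and "A (- int r) \<noteq> 0" and "A (int p) \<noteq> 0"
    and "k \<ge> 1" and "\<alpha> k = 1" and "\<bar>\<alpha> 0\<bar> + \<bar>\<beta> 0\<bar> > 0"
    and "lam > 0"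
    and A1: "(\<Sum>l\<in>{- int r..int p}. A l) = 0" "(\<Sum>l\<in>{- int r..int p}. of_int l * A l) = a"
    and A2: "(\<Sum>\<sigma>\<le>k. \<alpha> \<sigma>) = 0" "(\<Sum>\<sigma>\<le>k. of_nat \<sigma> * \<alpha> \<sigma>) = (\<Sum>\<sigma><k. \<beta> \<sigma>)"
    and A3: "stable_scheme A r p k \<alpha> \<beta> lam"
    and A4: "\<forall>\<theta>\<in>{-pi..pi} - {0}. symbol A r p (cis \<theta>) \<noteq> 0"
  shows "(a > 0 \<longrightarrow>
            C_num A r p = {0} \<and>
            (\<forall>v. boundary_layer_profile A r p 0 v \<longleftrightarrow> v = (\<lambda>_. 0)))
       \<and> (a < 0 \<longrightarrow>
            C_num A r p = UNIV \<and>
            (\<forall>u. \<exists>!v. boundary_layer_profile A r p u v) \<and>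
            (\<forall>u v. boundary_layer_profile A r p u v \<longrightarrow>
               (\<exists>K \<delta>. \<delta> > 0 \<and> (\<forall>j. \<bar>v j\<bar> \<le> K * exp (- \<delta> * real j)))) \<and>
            (\<forall>u v w. boundary_layer_profile A r p u v \<longrightarrow> boundary_layer_profile A r p 1 w \<longrightarrow>
               (\<forall>j. v j = u * w j)))"
proof -
  interpret stable_stencil_scheme A r p a lam k \<alpha> \<beta>
    using assms by unfold_locales auto
  show ?thesis using profiles_positive_speed profiles_negative_speed by blast
qed

end
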